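(* Let $R$ be an integral domain, $1\le n\le d$, $X=\{x_1,\dots,x_n\}$, and let $Y=\{y_1,\dots,y_d\}$ be $d$ distinct indeterminates. Let $s_1(Y),\dots,s_d(Y)$ be the elementary symmetric polynomials in $Y$, so that $u=\prod_{i=1}^d(x-y_i)=x^d-s_1(Y)x^{d-1}+\cdots+(-1)^ds_d(Y)$. For $1\le i\le n$ let $$g_i(x_1,\dots,x_i)=h^{(i)}_{d-i+1}+\sum_{k=i-1}^{d-1}(-1)^{d-k}s_{d-k}(Y)\,h^{(i)}_{k-i+1}\in \mathbb{Z}[Y][X],$$ and let $G(s(Y))=\{g_1,\dots,g_n\}$. Then for every symmetric polynomial $h\in R[X]$, the normal form $r_{G(s(Y))}(h)$ of $h$ modulo $G(s(Y))$ with respect to the lexicographic order in $X$ with $x_1\prec\cdots\prec x_n$ lies in $R[Y][X]$, is symmetric in $X$ of degree $\le d-n$ in each variable of $X$, is symmetric in the elements of $Y$, and equals the generic symmetric Lagrange interpolant: $$r_Y(h)=r_{G(s(Y))}(h),\qquad\text{where}\quad r_Y(h)=\sum_{Y'\subset_n Y} h(Y')\,\frac{\prod_{x\in X,\,y'\in Y\setminus Y'}(x-y')}{\prod_{y\in Y',\,y'\in Y\setminus Y'}(y-y')}.$$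
   Context: $h^{(i)}_j=\sum_{k_1+\cdots+k_i=j}x_1^{k_1}\cdots x_i^{k_i}$ is the complete homogeneous symmetric polynomial of degree $j$ in $x_1,\dots,x_i$. Each $g_i$ is monic in $x_i$ with leading term $x_i^{d-i+1}$ for the lexicographic order on monomials in $X$, so division by $G(s(Y))$ requires no division by coefficients. $Y'\subset_n Y$ ranges over the $n$-element subsets of $Y$, and $h(Y')$ means substituting the elements of $Y'$ for $x_1,\dots,x_n$ in any order; $r_Y(h)$ a priori lies in $\operatorname{Frac}(R)(Y)[X]$. *)

theory Defs
  imports "HOL-Combinatorics.Permutations" "HOL-Library.Poly_Mapping" "HOL-Computational_Algebra.Fraction_Field"
begin

text \<open>Convention: x_i (1 <= i <= n) is variable number i-1, and
  y_j (1 <= j <= d) is variable number n+j-1.\<close>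

type_synonym 'a mpoly = "(nat \<Rightarrow>\<^sub>0 nat) \<Rightarrow>\<^sub>0 'a"

definition Var :: "nat \<Rightarrow> 'a::comm_ring_1 mpoly" where
  "Var v = Poly_Mapping.single (Poly_Mapping.single v 1) 1"

definition Const :: "'a::comm_ring_1 \<Rightarrow> 'a mpoly" where
  "Const c = Poly_Mapping.single 0 c"

definition monom :: "(nat \<Rightarrow>\<^sub>0 nat) \<Rightarrow> 'a::comm_ring_1 mpoly" where
  "monom m = Poly_Mapping.single m 1"

definition vars :: "'a::comm_ring_1 mpoly \<Rightarrow> nat set" where
  "vars p = (\<Union>m\<in>Poly_Mapping.keys p. Poly_Mapping.keys (m :: nat \<Rightarrow>\<^sub>0 nat))"

definition subst :: "(nat \<Rightarrow> 'a::comm_ring_1 mpoly) \<Rightarrow> 'a mpoly \<Rightarrow> 'a mpoly" where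
  "subst \<sigma> p = (\<Sum>m\<in>Poly_Mapping.keys p. Const (Poly_Mapping.lookup p m) * (\<Prod>v\<in>Poly_Mapping.keys m. \<sigma> v ^ Poly_Mapping.lookup m v))"

definition rename :: "(nat \<Rightarrow> nat) \<Rightarrow> 'a::comm_ring_1 mpoly \<Rightarrow> 'a mpoly" where
  "rename \<pi> p = subst (\<lambda>v. Var (\<pi> v)) p"

definition symmetric_in :: "nat set \<Rightarrow> 'a::comm_ring_1 mpoly \<Rightarrow> bool" where
  "symmetric_in V p \<longleftrightarrow> (\<forall>\<pi>. \<pi> permutes V \<longrightarrow> rename \<pi> p = p)"

abbreviation Xvars :: "nat \<Rightarrow> nat set" where "Xvars n \<equiv> {0..<n}"
abbreviation Yvars :: "nat \<Rightarrow> nat \<Rightarrow> nat set" where "Yvars n d \<equiv> {n..<n+d}"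

definition esym :: "nat set \<Rightarrow> nat \<Rightarrow> 'a::comm_ring_1 mpoly" where
  "esym V k = (\<Sum>S\<in>{S. S \<subseteq> V \<and> card S = k}. \<Prod>v\<in>S. Var v)"

text \<open>Complete homogeneous symmetric polynomial h^(i)_j in x_1..x_i,
  i.e. in the variables 0..<i.\<close>
definition hcomp :: "nat \<Rightarrow> nat \<Rightarrow> 'a::comm_ring_1 mpoly" where
  "hcomp i j = (\<Sum>m\<in>{m. Poly_Mapping.keys m \<subseteq> {0..<i} \<and> (\<Sum>v\<in>Poly_Mapping.keys m. Poly_Mapping.lookup m v) = j}. monom m)"

definition gpol :: "nat \<Rightarrow> nat \<Rightarrow> nat \<Rightarrow> 'a::comm_ring_1 mpoly" where
  "gpol n d i = hcomp i (d + 1 - i)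
     + (\<Sum>k\<in>{i-1..d-1}. (-1) ^ (d - k) * esym (Yvars n d) (d - k) * hcomp i (k + 1 - i))"

text \<open>r is reduced w.r.t. G(s(Y)): no monomial of r is divisible by the leading
  monomial x_i^(d-i+1) of g_i (lex order, x_1 < ... < x_n).\<close>
definition reduced_G :: "nat \<Rightarrow> nat \<Rightarrow> 'a::comm_ring_1 mpoly \<Rightarrow> bool" where
  "reduced_G n d r \<longleftrightarrow> (\<forall>m\<in>Poly_Mapping.keys r. \<forall>i\<in>{1..n}. Poly_Mapping.lookup m (i - 1) < d + 1 - i)"

definition normal_form_G :: "nat \<Rightarrow> nat \<Rightarrow> 'a::comm_ring_1 mpoly \<Rightarrow> 'a mpoly" where
  "normal_form_G n d h = (THE r. reduced_G n d r \<and>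
      (\<exists>c::nat \<Rightarrow> 'a mpoly. h - r = (\<Sum>i\<in>{1..n}. c i * gpol n d i)))"

abbreviation fr :: "'a::idom mpoly \<Rightarrow> 'a mpoly fract" where
  "fr p \<equiv> Fract p 1"

text \<open>h(Y'): substitute the elements of Y' (in increasing order) for x_1..x_n.\<close>
definition eval_at :: "nat \<Rightarrow> nat set \<Rightarrow> 'a::comm_ring_1 mpoly \<Rightarrow> 'a mpoly" where
  "eval_at n Y' h = subst (\<lambda>v. if v < n then Var (sorted_list_of_set Y' ! v) else Var v) h"

definition lagrange_rY :: "nat \<Rightarrow> nat \<Rightarrow> 'a::idom mpoly \<Rightarrow> 'a mpoly fract" where
  "lagrange_rY n d h = (\<Sum>Y'\<in>{Y'. Y' \<subseteq> Yvars n d \<and> card Y' = n}.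
      fr (eval_at n Y' h)
      * fr (\<Prod>x\<in>Xvars n. \<Prod>y'\<in>Yvars n d - Y'. Var x - Var y')
      / fr (\<Prod>y\<in>Y'. \<Prod>y'\<in>Yvars n d - Y'. Var y - Var y'))"

end

theory Submission
  imports Defs "HOL-Computational_Algebra.Polynomial"
begin

text \<open>Each \<open>g\<^sub>i\<close> is the \<open>(i-1)\<close>-st divided difference of \<open>u(x) = \<Prod>(x - y\<^sub>j)\<close>, so
  it vanishes whenever \<open>x\<^sub>1, \<dots>, x\<^sub>n\<close> are replaced by distinct elements of \<open>Y\<close>. Conversely, a
  polynomial of degree \<open>< d - i + 1\<close> in each \<open>x\<^sub>i\<close> that vanishes at all these assignments is zero
  (count roots in \<open>x\<^sub>n\<close>, then \<open>x\<^bsub>n-1\<^esub>\<close>, \<dots>). Hence the reduced polynomials are determined by their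
  values at the assignments: this gives the existence and uniqueness of the normal form, its
  symmetry in \<open>X\<close> and in \<open>Y\<close> (permuting \<open>X\<close> or \<open>Y\<close> permutes the assignments), and its
  equality with \<open>r\<^sub>Y(h)\<close>, which after clearing the denominator \<open>D\<close> (a polynomial in \<open>Y\<close> only)
  has degree \<open>\<le> d - n\<close> in each \<open>x\<^sub>i\<close> and the same values \<open>h(Y')\<close>.\<close>

section \<open>Substitution in multivariate polynomials\<close>

lemma poly_mapping_sum_single:
  "(p :: 'x \<Rightarrow>\<^sub>0 'b::comm_monoid_add)
     = (\<Sum>m\<in>Poly_Mapping.keys p. Poly_Mapping.single m (Poly_Mapping.lookup p m))"
  by (rule poly_mapping_eqI) (simp add: lookup_sum lookup_single when_def in_keys_iff)

lemma keys_plus_nat: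
  "Poly_Mapping.keys (a + b :: 'x \<Rightarrow>\<^sub>0 nat) = Poly_Mapping.keys a \<union> Poly_Mapping.keys b"
  by (auto simp: in_keys_iff lookup_add)

lemma Const_add: "Const (a + b) = Const a + Const b"
  by (simp add: Const_def single_add)

lemma Const_mult: "Const (a * b) = Const a * Const b"
  by (simp add: Const_def mult_single)

lemma Const_0 [simp]: "Const 0 = 0"
  by (simp add: Const_def)

lemma Const_1 [simp]: "Const 1 = 1"
  by (simp add: Const_def)

lemma Var_power: "Var v ^ k = Poly_Mapping.single (Poly_Mapping.single v k) 1"
  by (induction k) (simp_all add: Var_def mult_single single_add[symmetric] add.commute)

lemma Var_diff_nonzero: "u \<noteq> v \<Longrightarrow> (Var u - Var v :: 'a::comm_ring_1 mpoly) \<noteq> 0"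
proof
  assume "u \<noteq> v" "Var u - Var v = (0 :: 'a mpoly)"
  then have "Poly_Mapping.lookup (Var u - Var v :: 'a mpoly) (Poly_Mapping.single u 1) = 0" by simp
  moreover have "Poly_Mapping.single u (1::nat) \<noteq> Poly_Mapping.single v 1"
    using \<open>u \<noteq> v\<close> by (metis lookup_single_eq lookup_single_not_eq one_neq_zero)
  ultimately show False by (simp add: Var_def lookup_minus lookup_single)
qed

lemma Var_inject: "Var u = (Var v :: 'a::comm_ring_1 mpoly) \<longleftrightarrow> u = v"
  using Var_diff_nonzero[of u v] by auto

definition monom_eval :: "(nat \<Rightarrow> 'a::comm_ring_1 mpoly) \<Rightarrow> (nat \<Rightarrow>\<^sub>0 nat) \<Rightarrow> 'a mpoly" where
  "monom_eval \<sigma> m = (\<Prod>v\<in>Poly_Mapping.keys m. \<sigma> v ^ Poly_Mapping.lookup m v)"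

lemma monom_eval_superset:
  assumes "finite S" "Poly_Mapping.keys m \<subseteq> S"
  shows "monom_eval \<sigma> m = (\<Prod>v\<in>S. \<sigma> v ^ Poly_Mapping.lookup m v)"
  unfolding monom_eval_def
  by (rule prod.mono_neutral_left) (use assms in \<open>auto simp: in_keys_iff\<close>)

lemma monom_eval_0 [simp]: "monom_eval \<sigma> 0 = 1"
  by (simp add: monom_eval_def)

lemma monom_eval_single: "monom_eval \<sigma> (Poly_Mapping.single v k) = \<sigma> v ^ k"
  by (cases "k = 0") (simp_all add: monom_eval_def)

lemma monom_eval_add: "monom_eval \<sigma> (a + b) = monom_eval \<sigma> a * monom_eval \<sigma> b"
proof -
  let ?S = "Poly_Mapping.keys a \<union> Poly_Mapping.keys b"
  have "monom_eval \<sigma> (a + b) = (\<Prod>v\<in>?S. \<sigma> v ^ Poly_Mapping.lookup (a + b) v)"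
    by (rule monom_eval_superset) (auto simp: keys_plus_nat)
  also have "\<dots> = (\<Prod>v\<in>?S. \<sigma> v ^ Poly_Mapping.lookup a v) * (\<Prod>v\<in>?S. \<sigma> v ^ Poly_Mapping.lookup b v)"
    by (simp add: lookup_add power_add prod.distrib)
  also have "\<dots> = monom_eval \<sigma> a * monom_eval \<sigma> b"
    by (subst (1 2) monom_eval_superset[symmetric]) auto
  finally show ?thesis .
qed

lemma monom_eval_cong:
  "(\<And>v. v \<in> Poly_Mapping.keys m \<Longrightarrow> \<sigma> v = \<tau> v) \<Longrightarrow> monom_eval \<sigma> m = monom_eval \<tau> m"
  unfolding monom_eval_def by (rule prod.cong) auto

lemma monom_eval_Var: "monom_eval Var m = Poly_Mapping.single m 1"
proof -
  have "(\<Prod>v\<in>S. Var v ^ Poly_Mapping.lookup m v :: 'a::comm_ring_1 mpoly) =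
      Poly_Mapping.single (\<Sum>v\<in>S. Poly_Mapping.single v (Poly_Mapping.lookup m v)) 1"
    if "finite S" for S
    using that by (induction S rule: finite_induct) (simp_all add: Var_power mult_single)
  then show ?thesis unfolding monom_eval_def by (simp flip: poly_mapping_sum_single)
qed

lemma subst_eq_monom_eval:
  "subst \<sigma> p = (\<Sum>m\<in>Poly_Mapping.keys p. Const (Poly_Mapping.lookup p m) * monom_eval \<sigma> m)"
  by (simp add: subst_def monom_eval_def)

lemma subst_superset:
  assumes "finite S" "Poly_Mapping.keys p \<subseteq> S"
  shows "subst \<sigma> p = (\<Sum>m\<in>S. Const (Poly_Mapping.lookup p m) * monom_eval \<sigma> m)"
  unfolding subst_eq_monom_eval
  by (rule sum.mono_neutral_left) (use assms in \<open>auto simp: in_keys_iff\<close>)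

lemma subst_0 [simp]: "subst \<sigma> 0 = 0"
  by (simp add: subst_def)

lemma subst_single: "subst \<sigma> (Poly_Mapping.single m c) = Const c * monom_eval \<sigma> m"
  by (subst subst_superset[of "{m}"]) auto

lemma subst_add: "subst \<sigma> (p + q) = subst \<sigma> p + subst \<sigma> q"
proof -
  let ?S = "Poly_Mapping.keys p \<union> Poly_Mapping.keys q"
  have "subst \<sigma> (p + q) = (\<Sum>m\<in>?S. Const (Poly_Mapping.lookup (p + q) m) * monom_eval \<sigma> m)"
    by (rule subst_superset) (use keys_add[of p q] in auto)
  also have "\<dots> = (\<Sum>m\<in>?S. Const (Poly_Mapping.lookup p m) * monom_eval \<sigma> m)
      + (\<Sum>m\<in>?S. Const (Poly_Mapping.lookup q m) * monom_eval \<sigma> m)"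
    by (simp add: lookup_add Const_add distrib_right sum.distrib)
  also have "\<dots> = subst \<sigma> p + subst \<sigma> q"
    by (subst (1 2) subst_superset[symmetric]) auto
  finally show ?thesis .
qed

lemma subst_sum: "subst \<sigma> (sum f I) = (\<Sum>i\<in>I. subst \<sigma> (f i))"
  by (induction I rule: infinite_finite_induct) (simp_all add: subst_add)

lemma subst_mult: "subst \<sigma> (p * q) = subst \<sigma> p * subst \<sigma> q"
proof -
  have "p * q = (\<Sum>a\<in>Poly_Mapping.keys p. \<Sum>b\<in>Poly_Mapping.keys q.
      Poly_Mapping.single a (Poly_Mapping.lookup p a)
      * Poly_Mapping.single b (Poly_Mapping.lookup q b))"
    by (subst (1) poly_mapping_sum_single[of p], subst (1) poly_mapping_sum_single[of q])
      (simp add: sum_product)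
  then have "subst \<sigma> (p * q) = (\<Sum>a\<in>Poly_Mapping.keys p. \<Sum>b\<in>Poly_Mapping.keys q.
      (Const (Poly_Mapping.lookup p a) * monom_eval \<sigma> a)
      * (Const (Poly_Mapping.lookup q b) * monom_eval \<sigma> b))"
    by (simp add: subst_sum mult_single subst_single monom_eval_add Const_mult mult_ac)
  also have "\<dots> = subst \<sigma> p * subst \<sigma> q"
    by (simp add: subst_eq_monom_eval sum_product)
  finally show ?thesis .
qed

lemma subst_1 [simp]: "subst \<sigma> 1 = 1"
  using subst_single[of \<sigma> 0 1] by simp

lemma subst_Const [simp]: "subst \<sigma> (Const c) = Const c"
  by (simp add: Const_def subst_single)

lemma subst_Var [simp]: "subst \<sigma> (Var v) = \<sigma> v"
  by (simp add: Var_def subst_single monom_eval_single)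

lemma subst_uminus: "subst \<sigma> (- p) = - subst \<sigma> p"
  using subst_add[of \<sigma> p "- p"] by (intro minus_unique[symmetric]) simp

lemma subst_diff: "subst \<sigma> (p - q) = subst \<sigma> p - subst \<sigma> q"
  using subst_add[of \<sigma> p "- q"] by (simp add: subst_uminus)

lemma subst_power: "subst \<sigma> (p ^ k) = subst \<sigma> p ^ k"
  by (induction k) (simp_all add: subst_mult)

lemma subst_prod: "subst \<sigma> (prod f I) = (\<Prod>i\<in>I. subst \<sigma> (f i))"
  by (induction I rule: infinite_finite_induct) (simp_all add: subst_mult)

lemma subst_subst: "subst \<sigma> (subst \<tau> p) = subst (\<lambda>v. subst \<sigma> (\<tau> v)) p"
  by (simp add: subst_def[of \<tau> p] subst_def[of "\<lambda>v. subst \<sigma> (\<tau> v)" p]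
      subst_sum subst_mult subst_prod subst_power)

lemma subst_Var_id [simp]: "subst Var p = p"
  by (simp add: subst_eq_monom_eval monom_eval_Var Const_def mult_single
      flip: poly_mapping_sum_single)

lemma subst_cong:
  assumes "\<And>v. v \<in> vars p \<Longrightarrow> \<sigma> v = \<tau> v"
  shows "subst \<sigma> p = subst \<tau> p"
  unfolding subst_eq_monom_eval
  by (intro sum.cong refl arg_cong2[where f = "(*)"] monom_eval_cong)
    (use assms in \<open>auto simp: vars_def\<close>)

lemma subst_eq_self: "(\<And>v. v \<in> vars p \<Longrightarrow> \<sigma> v = Var v) \<Longrightarrow> subst \<sigma> p = p"
  using subst_cong[of p \<sigma> Var] by simp

lemma rename_Var [simp]: "rename \<pi> (Var u) = Var (\<pi> u)"
  by (simp add: rename_def)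

lemma subst_rename: "subst \<sigma> (rename \<pi> p) = subst (\<lambda>v. \<sigma> (\<pi> v)) p"
  by (simp add: rename_def subst_subst)

lemma rename_subst: "rename \<pi> (subst \<sigma> p) = subst (\<lambda>v. rename \<pi> (\<sigma> v)) p"
  by (simp add: rename_def subst_subst)

section \<open>Weighted degree bounds\<close>

definition mweight :: "(nat \<Rightarrow> nat) \<Rightarrow> (nat \<Rightarrow>\<^sub>0 nat) \<Rightarrow> nat" where
  "mweight w m = (\<Sum>v\<in>Poly_Mapping.keys m. Poly_Mapping.lookup m v * w v)"

definition wdeg_le :: "(nat \<Rightarrow> nat) \<Rightarrow> nat \<Rightarrow> 'a::comm_ring_1 mpoly \<Rightarrow> bool" where
  "wdeg_le w N p \<longleftrightarrow> (\<forall>m\<in>Poly_Mapping.keys p. mweight w m \<le> N)"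

definition var_weight :: "nat \<Rightarrow> nat \<Rightarrow> nat" where
  "var_weight v u = (if u = v then 1 else 0)"

lemma mweight_superset:
  assumes "finite S" "Poly_Mapping.keys m \<subseteq> S"
  shows "mweight w m = (\<Sum>v\<in>S. Poly_Mapping.lookup m v * w v)"
  unfolding mweight_def
  by (rule sum.mono_neutral_left) (use assms in \<open>auto simp: in_keys_iff\<close>)

lemma mweight_0 [simp]: "mweight w 0 = 0"
  by (simp add: mweight_def)

lemma mweight_add: "mweight w (a + b) = mweight w a + mweight w b"
proof -
  let ?S = "Poly_Mapping.keys a \<union> Poly_Mapping.keys b"
  have "mweight w (a + b) = (\<Sum>v\<in>?S. Poly_Mapping.lookup (a + b) v * w v)"
    by (rule mweight_superset) (auto simp: keys_plus_nat)
  also have "\<dots> = (\<Sum>v\<in>?S. Poly_Mapping.lookup a v * w v) + (\<Sum>v\<in>?S. Poly_Mapping.lookup b v * w v)"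
    by (simp add: lookup_add sum.distrib algebra_simps)
  also have "\<dots> = mweight w a + mweight w b"
    by (subst (1 2) mweight_superset[symmetric]) auto
  finally show ?thesis .
qed

lemma mweight_single: "mweight w (Poly_Mapping.single v k) = k * w v"
  by (cases "k = 0") (simp_all add: mweight_def)

lemma mweight_var_weight: "mweight (var_weight v) m = Poly_Mapping.lookup m v"
proof -
  have "mweight (var_weight v) m
      = (\<Sum>u\<in>insert v (Poly_Mapping.keys m). Poly_Mapping.lookup m u * var_weight v u)"
    by (rule mweight_superset) auto
  then show ?thesis
    by (simp add: var_weight_def if_distrib sum.delta cong: if_cong)
qed

lemma wdeg_le_var_weight_iff:
  "wdeg_le (var_weight v) N p \<longleftrightarrow> (\<forall>m\<in>Poly_Mapping.keys p. Poly_Mapping.lookup m v \<le> N)"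
  by (simp add: wdeg_le_def mweight_var_weight)

lemma notin_vars_iff_wdeg_le: "v \<notin> vars p \<longleftrightarrow> wdeg_le (var_weight v) 0 p"
  by (auto simp: wdeg_le_var_weight_iff vars_def in_keys_iff)

lemma wdeg_le_mono: "wdeg_le w N p \<Longrightarrow> N \<le> M \<Longrightarrow> wdeg_le w M p"
  by (auto simp: wdeg_le_def)

lemma wdeg_le_Const [simp]: "wdeg_le w N (Const c)"
  by (simp add: wdeg_le_def Const_def)

lemma wdeg_le_1 [simp]: "wdeg_le w N 1"
  using wdeg_le_Const[of w N 1] by simp

lemma wdeg_le_single: "mweight w m \<le> N \<Longrightarrow> wdeg_le w N (Poly_Mapping.single m c)"
  by (simp add: wdeg_le_def)

lemma wdeg_le_Var: "w v \<le> N \<Longrightarrow> wdeg_le w N (Var v)"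
  by (simp add: Var_def wdeg_le_single mweight_single)

lemma wdeg_le_add: "wdeg_le w N p \<Longrightarrow> wdeg_le w N q \<Longrightarrow> wdeg_le w N (p + q)"
  using keys_add[of p q] by (auto simp: wdeg_le_def)

lemma wdeg_le_uminus: "wdeg_le w N p \<Longrightarrow> wdeg_le w N (- p)"
  by (simp add: wdeg_le_def)

lemma wdeg_le_diff: "wdeg_le w N p \<Longrightarrow> wdeg_le w N q \<Longrightarrow> wdeg_le w N (p - q)"
  using keys_diff[of p q] by (auto simp: wdeg_le_def)

lemma wdeg_le_sum: "(\<And>i. i \<in> I \<Longrightarrow> wdeg_le w N (f i)) \<Longrightarrow> wdeg_le w N (sum f I)"
  using keys_sum[of f I] by (force simp: wdeg_le_def)

lemma wdeg_le_mult: "wdeg_le w N p \<Longrightarrow> wdeg_le w M q \<Longrightarrow> wdeg_le w (N + M) (p * q)"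
  using keys_mult[of p q] by (force simp: wdeg_le_def mweight_add intro: add_mono)

lemma wdeg_le_power: "wdeg_le w N p \<Longrightarrow> wdeg_le w (k * N) (p ^ k)"
  by (induction k) (auto dest: wdeg_le_mult)

lemma wdeg_le_prod:
  "(\<And>i. i \<in> I \<Longrightarrow> wdeg_le w (N i) (f i)) \<Longrightarrow> wdeg_le w (\<Sum>i\<in>I. N i) (prod f I)"
  by (induction I rule: infinite_finite_induct) (auto intro: wdeg_le_mult)

lemma wdeg_le_prod_0: "(\<And>i. i \<in> I \<Longrightarrow> wdeg_le w 0 (f i)) \<Longrightarrow> wdeg_le w 0 (prod f I)"
  using wdeg_le_prod[of I w "\<lambda>_. 0" f] by simp

lemma wdeg_le_subst:
  assumes "wdeg_le e N p" "\<And>v. v \<in> vars p \<Longrightarrow> wdeg_le w (e v) (\<sigma> v)"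
  shows "wdeg_le w N (subst \<sigma> p)"
  unfolding subst_eq_monom_eval
proof (rule wdeg_le_sum)
  fix m assume m: "m \<in> Poly_Mapping.keys p"
  have "wdeg_le w (0 + mweight e m) (Const (Poly_Mapping.lookup p m) * monom_eval \<sigma> m)"
    unfolding monom_eval_def mweight_def
    by (intro wdeg_le_mult wdeg_le_prod wdeg_le_power wdeg_le_Const assms(2))
      (use m in \<open>auto simp: vars_def\<close>)
  moreover have "mweight e m \<le> N" using assms(1) m by (auto simp: wdeg_le_def)
  ultimately show "wdeg_le w N (Const (Poly_Mapping.lookup p m) * monom_eval \<sigma> m)"
    by (auto elim: wdeg_le_mono)
qed

lemma wdeg_le_rename:
  assumes "\<pi> permutes S" "wdeg_le (var_weight (inv \<pi> v)) N p"
  shows "wdeg_le (var_weight v) N (rename \<pi> p)"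
  unfolding rename_def
proof (rule wdeg_le_subst[OF assms(2)])
  fix u
  have "\<pi> u = v \<longleftrightarrow> u = inv \<pi> v" using permutes_inv_eq[OF assms(1), of v u] by auto
  then show "wdeg_le (var_weight v) (var_weight (inv \<pi> v) u) (Var (\<pi> u))"
    by (intro wdeg_le_Var) (simp add: var_weight_def)
qed

text \<open>Split \<open>p\<close> into its monomials of \<open>v\<close>-degree \<open>\<le> N\<close> and \<open>> N\<close>; as \<open>D\<close> is free of \<open>v\<close>,
  the product of \<open>D\<close> with the second part has only monomials of \<open>v\<close>-degree \<open>> N\<close>, so that
  part vanishes.\<close>

lemma wdeg_le_mult_cancel:
  fixes D p :: "'a::idom mpoly"
  assumes "wdeg_le (var_weight v) 0 D" "D \<noteq> 0" "wdeg_le (var_weight v) N (D * p)"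
  shows "wdeg_le (var_weight v) N p"
proof -
  define A where "A = {m\<in>Poly_Mapping.keys p. Poly_Mapping.lookup m v \<le> N}"
  define B where "B = {m\<in>Poly_Mapping.keys p. \<not> Poly_Mapping.lookup m v \<le> N}"
  define low where "low = (\<Sum>m\<in>A. Poly_Mapping.single m (Poly_Mapping.lookup p m))"
  define high where "high = (\<Sum>m\<in>B. Poly_Mapping.single m (Poly_Mapping.lookup p m))"
  have "low + high = (\<Sum>m\<in>A \<union> B. Poly_Mapping.single m (Poly_Mapping.lookup p m))"
    unfolding low_def high_def
    by (rule sum.union_disjoint[symmetric]) (auto simp: A_def B_def)
  also have "A \<union> B = Poly_Mapping.keys p" by (auto simp: A_def B_def)
  finally have p_eq: "p = low + high" using poly_mapping_sum_single[of p] by simp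
  have keys_high: "Poly_Mapping.keys high \<subseteq> B"
    using keys_sum[of _ B] unfolding high_def by (force split: if_splits)
  have low: "wdeg_le (var_weight v) N low"
    using keys_sum[of _ A] unfolding low_def wdeg_le_var_weight_iff
    by (force simp: A_def split: if_splits)
  have "D * high = D * p - D * low" using p_eq by (simp add: algebra_simps)
  then have Dhigh: "wdeg_le (var_weight v) N (D * high)"
    using assms(3) wdeg_le_mult[OF assms(1) low] by (auto intro: wdeg_le_diff)
  have "Poly_Mapping.keys (D * high) = {}"
  proof safe
    fix m assume m: "m \<in> Poly_Mapping.keys (D * high)"
    then obtain a b where ab: "m = a + b" "a \<in> Poly_Mapping.keys D" "b \<in> Poly_Mapping.keys high"
      using keys_mult[of D high] by blast
    have "Poly_Mapping.lookup a v = 0" using assms(1) ab(2) by (auto simp: wdeg_le_var_weight_iff)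
    moreover have "Poly_Mapping.lookup b v > N" using keys_high ab(3) by (auto simp: B_def)
    moreover have "Poly_Mapping.lookup m v \<le> N" using Dhigh m by (auto simp: wdeg_le_var_weight_iff)
    ultimately show "m \<in> {}" using ab(1) by (simp add: lookup_add)
  qed
  then have "high = 0" using assms(2) by simp
  then show ?thesis using low p_eq by simp
qed

lemma vars_subset_iff_wdeg_le: "vars p \<subseteq> W \<longleftrightarrow> (\<forall>v. v \<notin> W \<longrightarrow> wdeg_le (var_weight v) 0 p)"
  using notin_vars_iff_wdeg_le by blast

lemma vars_subset_imp_wdeg_le_0: "vars p \<subseteq> W \<Longrightarrow> v \<notin> W \<Longrightarrow> wdeg_le (var_weight v) 0 p"
  by (auto simp: vars_subset_iff_wdeg_le)

lemma vars_Var [simp]: "vars (Var v :: 'a::comm_ring_1 mpoly) = {v}"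
  by (simp add: vars_def Var_def)

lemma vars_Const [simp]: "vars (Const c) = {}"
  by (simp add: vars_def Const_def)

lemma vars_diff_subset:
  assumes "vars p \<subseteq> W" "vars q \<subseteq> W"
  shows "vars (p - q) \<subseteq> W"
proof -
  have "vars (p - q) \<subseteq> vars p \<union> vars q"
    using keys_diff[of p q] unfolding vars_def by blast
  then show ?thesis using assms by blast
qed

lemma vars_mult_subset:
  assumes "vars p \<subseteq> W" "vars q \<subseteq> W"
  shows "vars (p * q) \<subseteq> W"
proof -
  have "vars (p * q) \<subseteq> vars p \<union> vars q"
    using keys_mult[of p q] unfolding vars_def by (fastforce simp: keys_plus_nat)
  then show ?thesis using assms by blast
qed

lemma vars_sum_subset:
  assumes "\<And>i. i \<in> I \<Longrightarrow> vars (f i) \<subseteq> W"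
  shows "vars (sum f I) \<subseteq> W"
proof -
  have "vars (sum f I) \<subseteq> (\<Union>i\<in>I. vars (f i))"
    using keys_sum[of f I] unfolding vars_def by blast
  then show ?thesis using assms by blast
qed

lemma vars_prod_subset: "(\<And>i. i \<in> I \<Longrightarrow> vars (f i) \<subseteq> W) \<Longrightarrow> vars (prod f I) \<subseteq> W"
  by (induction I rule: infinite_finite_induct)
    (simp_all add: vars_mult_subset flip: Const_1)

lemma vars_power_subset: "vars p \<subseteq> W \<Longrightarrow> vars (p ^ k) \<subseteq> W"
  using vars_prod_subset[of "{..<k}" "\<lambda>_. p"] by simp

lemma vars_subst_subset:
  assumes "\<And>v. v \<in> vars p \<Longrightarrow> vars (\<sigma> v) \<subseteq> W"
  shows "vars (subst \<sigma> p) \<subseteq> W"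
  unfolding subst_def
proof (intro vars_sum_subset vars_mult_subset vars_prod_subset vars_power_subset)
  fix m v assume "m \<in> Poly_Mapping.keys p" "v \<in> Poly_Mapping.keys m"
  then have "v \<in> vars p" by (auto simp: vars_def)
  then show "vars (\<sigma> v) \<subseteq> W" by (rule assms)
qed simp

lemma vars_mult_cancel:
  fixes D p :: "'a::idom mpoly"
  assumes "D \<noteq> 0" "vars D \<subseteq> W" "vars (D * p) \<subseteq> W"
  shows "vars p \<subseteq> W"
  using assms wdeg_le_mult_cancel[of _ D 0 p] by (auto simp: vars_subset_iff_wdeg_le)

section \<open>Polynomials vanishing at many points\<close>

text \<open>\<open>univariate k p\<close> is \<open>p\<close> viewed as a polynomial in the variable \<open>k\<close> whose coefficients
  are polynomials free of \<open>k\<close>.\<close>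

definition univariate :: "nat \<Rightarrow> 'a::comm_ring_1 mpoly \<Rightarrow> 'a mpoly poly" where
  "univariate k p = (\<Sum>m\<in>Poly_Mapping.keys p.
     Polynomial.monom (Poly_Mapping.single (Poly_Mapping.update k 0 m) (Poly_Mapping.lookup p m))
       (Poly_Mapping.lookup m k))"

lemma update_0_plus_single:
  "Poly_Mapping.update k 0 m + Poly_Mapping.single k (Poly_Mapping.lookup m k) = m"
  by (rule poly_mapping_eqI) (simp add: lookup_add lookup_update lookup_single when_def)

lemma poly_univariate: "poly (univariate k p) t = subst (Var(k := t)) p"
proof -
  have "Const c * monom_eval (Var(k := t)) m
      = Poly_Mapping.single (Poly_Mapping.update k 0 m) c * t ^ Poly_Mapping.lookup m k" for c m
  proof -
    have "monom_eval (Var(k := t)) (Poly_Mapping.update k 0 m)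
        = monom_eval Var (Poly_Mapping.update k 0 m)"
      by (rule monom_eval_cong) (simp add: keys_update)
    then have "monom_eval (Var(k := t)) m
        = Poly_Mapping.single (Poly_Mapping.update k 0 m) 1 * t ^ Poly_Mapping.lookup m k"
      by (subst (1) update_0_plus_single[of k m, symmetric])
        (simp add: monom_eval_add monom_eval_single monom_eval_Var)
    then show ?thesis by (simp add: Const_def mult_single mult.assoc[symmetric])
  qed
  then show ?thesis
    by (simp add: univariate_def poly_sum poly_monom subst_eq_monom_eval)
qed

lemma degree_univariate_le: "wdeg_le (var_weight k) N p \<Longrightarrow> degree (univariate k p) \<le> N"
  unfolding univariate_def
  by (intro degree_sum_le)
    (auto simp: wdeg_le_var_weight_iff intro: order.trans[OF degree_monom_le])

lemma univariate_eq_0_iff: "univariate k p = 0 \<longleftrightarrow> p = 0"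
proof
  assume p: "univariate k p = 0"
  show "p = 0"
  proof (rule ccontr)
    assume "p \<noteq> 0"
    then obtain m0 where m0: "m0 \<in> Poly_Mapping.keys p" by (metis ex_in_conv keys_eq_empty)
    have "m = m0" if "Poly_Mapping.lookup m k = Poly_Mapping.lookup m0 k"
        "Poly_Mapping.update k 0 m = Poly_Mapping.update k 0 m0" for m
      using that update_0_plus_single[of k m] update_0_plus_single[of k m0] by metis
    then have "Poly_Mapping.lookup (coeff (univariate k p) (Poly_Mapping.lookup m0 k))
        (Poly_Mapping.update k 0 m0)
      = (\<Sum>m\<in>Poly_Mapping.keys p. if m = m0 then Poly_Mapping.lookup p m else 0)"
      unfolding univariate_def coeff_sum lookup_sum
      by (intro sum.cong refl) (auto simp: coeff_monom lookup_single when_def)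
    also have "\<dots> = Poly_Mapping.lookup p m0" using m0 by simp
    finally show False using p m0 by (simp add: in_keys_iff)
  qed
qed (simp add: univariate_def)

lemma eq_0_if_vanishes_at_Vars:
  fixes p :: "'a::idom mpoly"
  assumes "wdeg_le (var_weight k) N p" "finite S" "N < card S"
    and "\<And>y. y \<in> S \<Longrightarrow> subst (Var(k := Var y)) p = 0"
  shows "p = 0"
proof (rule ccontr)
  assume "p \<noteq> 0"
  then have nz: "univariate k p \<noteq> 0" by (simp add: univariate_eq_0_iff)
  have "card S = card (Var ` S :: 'a mpoly set)"
    by (rule card_image[symmetric]) (simp add: inj_on_def Var_inject)
  also have "\<dots> \<le> card {x. poly (univariate k p) x = 0}"
    using assms(4) by (intro card_mono poly_roots_finite nz) (auto simp: poly_univariate)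
  also have "\<dots> \<le> degree (univariate k p)" by (rule card_poly_roots_bound[OF nz])
  also have "\<dots> \<le> N" by (rule degree_univariate_le[OF assms(1)])
  finally show False using assms(3) by simp
qed

text \<open>With \<open>k = n\<close> and \<open>a\<close> injective into \<open>Y\<close>, \<open>subst (assign n a)\<close> evaluates \<open>x\<^sub>1, \<dots>, x\<^sub>n\<close> at
  distinct elements of \<open>Y\<close>.\<close>

definition assign :: "nat \<Rightarrow> (nat \<Rightarrow> nat) \<Rightarrow> nat \<Rightarrow> 'a::comm_ring_1 mpoly" where
  "assign k a v = (if v < k then Var (a v) else Var v)"

lemma assign_0 [simp]: "assign 0 a = Var"
  by (simp add: assign_def fun_eq_iff)

lemma subst_Var_upd_assign:
  assumes "k \<notin> a ` {0..<k}"
  shows "subst (Var(k := Var y)) (subst (assign k a) q) = subst (assign (Suc k) (a(k := y))) q"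
  unfolding subst_subst
  by (rule subst_cong) (use assms in \<open>auto simp: assign_def\<close>)

text \<open>Downward induction on the number \<open>k\<close> of assigned variables: once the variables below \<open>k\<close>
  are assigned distinct elements of \<open>Y\<close>, the variable \<open>k\<close> still has \<open>d - k\<close> admissible values in
  \<open>Y\<close>, more than its degree.\<close>

lemma eq_0_if_vanishes_at_assignments:
  fixes q :: "'a::idom mpoly"
  assumes Y: "finite Y" "card Y = d" "Y \<inter> {0..<n} = {}" and "n \<le> d"
    and deg: "\<And>v. v < n \<Longrightarrow> wdeg_le (var_weight v) (d - v - 1) q"
    and vanish: "\<And>a. inj_on a {0..<n} \<Longrightarrow> a ` {0..<n} \<subseteq> Y \<Longrightarrow> subst (assign n a) q = 0"
  shows "q = 0"
proof -
  have "\<forall>a. inj_on a {0..<j} \<and> a ` {0..<j} \<subseteq> Y \<longrightarrow> subst (assign j a) q = 0" if "j \<le> n" for j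
    using that
  proof (induction j rule: inc_induct)
    case base
    then show ?case using vanish by blast
  next
    case (step k)
    show ?case
    proof (intro allI impI, elim conjE)
      fix a assume inj: "inj_on a {0..<k}" and img: "a ` {0..<k} \<subseteq> Y"
      have "k \<notin> Y" using Y(3) step.hyps by auto
      then have k_notin: "k \<notin> a ` {0..<k}" using img by blast
      show "subst (assign k a) q = 0"
      proof (rule eq_0_if_vanishes_at_Vars)
        show "wdeg_le (var_weight k) (d - k - 1) (subst (assign k a) q)"
        proof (rule wdeg_le_subst[where e = "var_weight k"])
          show "wdeg_le (var_weight k) (d - k - 1) q" using deg step.hyps by simp
          show "wdeg_le (var_weight k) (var_weight k v) (assign k a v)" for v
            using k_notin by (auto simp: assign_def var_weight_def intro!: wdeg_le_Var)
        qed
        have "card (Y - a ` {0..<k}) = d - k"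
          using img inj Y by (simp add: card_Diff_subset card_image)
        then show "d - k - 1 < card (Y - a ` {0..<k})" using step.hyps \<open>n \<le> d\<close> by simp
        show "subst (Var(k := Var y)) (subst (assign k a) q) = 0" if "y \<in> Y - a ` {0..<k}" for y
        proof -
          have "inj_on (a(k := y)) {0..<Suc k}" "(a(k := y)) ` {0..<Suc k} \<subseteq> Y"
            using inj img that by (auto simp: atLeast0_lessThan_Suc inj_on_def)
          with step.IH have "subst (assign (Suc k) (a(k := y))) q = 0" by blast
          then show ?thesis by (simp add: subst_Var_upd_assign[OF k_notin])
        qed
      qed (use Y in simp)
    qed
  qed
  from this[of 0] show ?thesis by simp
qed

lemma eq_if_agree_at_assignments:
  fixes p q :: "'a::idom mpoly"
  assumes "finite Y" "card Y = d" "Y \<inter> {0..<n} = {}" "n \<le> d"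
    and "\<And>v. v < n \<Longrightarrow> wdeg_le (var_weight v) (d - v - 1) p"
    and "\<And>v. v < n \<Longrightarrow> wdeg_le (var_weight v) (d - v - 1) q"
    and "\<And>a. inj_on a {0..<n} \<Longrightarrow> a ` {0..<n} \<subseteq> Y \<Longrightarrow> subst (assign n a) p = subst (assign n a) q"
  shows "p = q"
  using eq_0_if_vanishes_at_assignments[of Y d n "p - q"] assms
  by (simp add: wdeg_le_diff subst_diff)

section \<open>The polynomials \<open>g\<^sub>i\<close> vanish at distinct elements of \<open>Y\<close>\<close>

definition monoms_of_degree :: "nat \<Rightarrow> nat \<Rightarrow> (nat \<Rightarrow>\<^sub>0 nat) set" where
  "monoms_of_degree i j = {m. Poly_Mapping.keys m \<subseteq> {0..<i}
     \<and> (\<Sum>v\<in>Poly_Mapping.keys m. Poly_Mapping.lookup m v) = j}"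

lemma hcomp_eq_sum_monoms: "hcomp i j = (\<Sum>m\<in>monoms_of_degree i j. Defs.monom m)"
  by (simp add: hcomp_def monoms_of_degree_def)

lemma monoms_of_degree_iff:
  "m \<in> monoms_of_degree i j \<longleftrightarrow>
     Poly_Mapping.keys m \<subseteq> {0..<i} \<and> (\<Sum>v<i. Poly_Mapping.lookup m v) = j"
proof -
  have "(\<Sum>v\<in>Poly_Mapping.keys m. Poly_Mapping.lookup m v) = (\<Sum>v<i. Poly_Mapping.lookup m v)"
    if "Poly_Mapping.keys m \<subseteq> {0..<i}"
    by (rule sum.mono_neutral_left) (use that in \<open>auto simp: in_keys_iff\<close>)
  then show ?thesis unfolding monoms_of_degree_def by auto
qed

lemma monoms_of_degree_0: "monoms_of_degree 0 j = (if j = 0 then {0} else {})"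
  by (auto simp: monoms_of_degree_iff)

lemma monoms_of_degree_Suc:
  "monoms_of_degree (Suc i) j
     = (\<Union>l\<le>j. (\<lambda>m. m + Poly_Mapping.single i l) ` monoms_of_degree i (j - l))"
proof (intro equalityI subsetI)
  fix m assume m: "m \<in> monoms_of_degree (Suc i) j"
  define l where "l = Poly_Mapping.lookup m i"
  define m' where "m' = Poly_Mapping.update i 0 m"
  have m_eq: "m = m' + Poly_Mapping.single i l"
    using update_0_plus_single[of i m] by (simp add: m'_def l_def)
  have "Poly_Mapping.keys m' \<subseteq> {0..<i}"
    using m by (auto simp: m'_def keys_update monoms_of_degree_iff)
  moreover have "(\<Sum>v<i. Poly_Mapping.lookup m' v) = (\<Sum>v<i. Poly_Mapping.lookup m v)"
    by (rule sum.cong) (auto simp: m'_def lookup_update)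
  ultimately have "m' \<in> monoms_of_degree i (j - l)" "l \<le> j"
    using m by (auto simp: monoms_of_degree_iff l_def)
  then show "m \<in> (\<Union>l\<le>j. (\<lambda>m. m + Poly_Mapping.single i l) ` monoms_of_degree i (j - l))"
    using m_eq by blast
next
  fix x assume "x \<in> (\<Union>l\<le>j. (\<lambda>m. m + Poly_Mapping.single i l) ` monoms_of_degree i (j - l))"
  then obtain l m where l: "l \<le> j" and m: "m \<in> monoms_of_degree i (j - l)"
      and x: "x = m + Poly_Mapping.single i l"
    by blast
  have keys: "Poly_Mapping.keys m \<subseteq> {0..<i}" and deg: "(\<Sum>v<i. Poly_Mapping.lookup m v) = j - l"
    using m by (auto simp: monoms_of_degree_iff)
  have "Poly_Mapping.lookup m i = 0" using keys by (auto simp: in_keys_iff)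
  moreover have "(\<Sum>v<i. Poly_Mapping.lookup x v) = (\<Sum>v<i. Poly_Mapping.lookup m v)"
    by (rule sum.cong) (auto simp: x lookup_add lookup_single)
  ultimately show "x \<in> monoms_of_degree (Suc i) j"
    using keys deg l by (auto simp: monoms_of_degree_iff x keys_plus_nat lookup_add)
qed

lemma finite_monoms_of_degree: "finite (monoms_of_degree i j)"
  by (induction i arbitrary: j) (simp_all add: monoms_of_degree_0 monoms_of_degree_Suc)

lemma sum_monoms_of_degree_Suc:
  "(\<Sum>m\<in>monoms_of_degree (Suc i) j. f m)
     = (\<Sum>l\<le>j. \<Sum>m\<in>monoms_of_degree i (j - l). f (m + Poly_Mapping.single i l))"
proof -
  have lookup_i: "Poly_Mapping.lookup (m + Poly_Mapping.single i l) i = l"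
    if "m \<in> monoms_of_degree i k" for m k l
    using that by (auto simp: monoms_of_degree_iff in_keys_iff lookup_add)
  have "(\<Sum>m\<in>monoms_of_degree (Suc i) j. f m)
      = (\<Sum>l\<le>j. sum f ((\<lambda>m. m + Poly_Mapping.single i l) ` monoms_of_degree i (j - l)))"
    unfolding monoms_of_degree_Suc
  proof (rule sum.UNION_disjoint)
    show "\<forall>l\<in>{..j}. \<forall>l'\<in>{..j}. l \<noteq> l' \<longrightarrow>
        (\<lambda>m. m + Poly_Mapping.single i l) ` monoms_of_degree i (j - l)
        \<inter> (\<lambda>m. m + Poly_Mapping.single i l') ` monoms_of_degree i (j - l') = {}"
      using lookup_i by (auto dest: arg_cong[where f = "\<lambda>m. Poly_Mapping.lookup m i"])
  qed (auto simp: finite_monoms_of_degree)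
  also have "\<dots> = (\<Sum>l\<le>j. \<Sum>m\<in>monoms_of_degree i (j - l). f (m + Poly_Mapping.single i l))"
    by (intro sum.cong refl sum.reindex[unfolded comp_def]) (auto simp: inj_on_def)
  finally show ?thesis .
qed

text \<open>\<open>hsym \<sigma> i j\<close> is \<open>h\<^bsup>(i)\<^esup>\<^sub>j\<close> evaluated at \<open>\<sigma> 0, \<dots>, \<sigma> (i - 1)\<close>.\<close>

fun hsym :: "(nat \<Rightarrow> 'b::comm_ring_1) \<Rightarrow> nat \<Rightarrow> nat \<Rightarrow> 'b" where
  "hsym \<sigma> 0 j = (if j = 0 then 1 else 0)"
| "hsym \<sigma> (Suc i) j = (\<Sum>l\<le>j. hsym \<sigma> i (j - l) * \<sigma> i ^ l)"

declare hsym.simps(2) [simp del]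

lemma subst_hcomp: "subst \<sigma> (hcomp i j) = hsym \<sigma> i j"
proof (induction i arbitrary: j)
  case 0
  then show ?case
    by (simp add: hcomp_eq_sum_monoms monoms_of_degree_0 Defs.monom_def subst_single)
next
  case (Suc i)
  have "subst \<sigma> (hcomp (Suc i) j) = (\<Sum>m\<in>monoms_of_degree (Suc i) j. monom_eval \<sigma> m)"
    by (simp add: hcomp_eq_sum_monoms subst_sum Defs.monom_def subst_single)
  also have "\<dots> = (\<Sum>l\<le>j. \<Sum>m\<in>monoms_of_degree i (j - l). monom_eval \<sigma> m * \<sigma> i ^ l)"
    by (simp add: sum_monoms_of_degree_Suc monom_eval_add monom_eval_single)
  also have "\<dots> = (\<Sum>l\<le>j. hsym \<sigma> i (j - l) * \<sigma> i ^ l)"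
    by (simp add: Suc[symmetric] hcomp_eq_sum_monoms subst_sum Defs.monom_def subst_single
        sum_distrib_right)
  finally show ?case by (simp add: hsym.simps(2))
qed

lemma hsym_cong: "(\<And>v. v < i \<Longrightarrow> \<sigma> v = \<tau> v) \<Longrightarrow> hsym \<sigma> i j = hsym \<tau> i j"
  by (induction i arbitrary: j) (auto simp: hsym.simps(2) intro!: sum.cong)

lemma hsym_degree_0 [simp]: "hsym \<sigma> i 0 = 1"
  by (induction i) (simp_all add: hsym.simps(2))

lemma hsym_1: "hsym \<sigma> (Suc 0) j = \<sigma> 0 ^ j"
proof -
  have "hsym \<sigma> (Suc 0) j = (\<Sum>l\<le>j. if l = j then \<sigma> 0 ^ l else 0)"
    unfolding hsym.simps(2) by (intro sum.cong refl) auto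
  then show ?thesis by simp
qed

lemma hsym_Suc_Suc: "hsym \<sigma> (Suc i) (Suc k) = hsym \<sigma> i (Suc k) + \<sigma> i * hsym \<sigma> (Suc i) k"
proof -
  have "hsym \<sigma> (Suc i) (Suc k)
      = (\<Sum>l\<le>k. hsym \<sigma> i (Suc k - Suc l) * \<sigma> i ^ Suc l) + hsym \<sigma> i (Suc k)"
    unfolding hsym.simps(2) by (subst sum.atMost_Suc_shift) simp
  then show ?thesis by (simp add: hsym.simps(2) sum_distrib_left mult_ac)
qed

lemma hsym_divided_difference:
  "hsym (\<sigma>(i := a)) (Suc i) (Suc j) - hsym (\<sigma>(i := b)) (Suc i) (Suc j)
     = (a - b) * hsym (\<sigma>(i := a, Suc i := b)) (Suc (Suc i)) j"
proof (induction j)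
  case 0
  have "hsym (\<sigma>(i := c)) (Suc i) (Suc 0) = hsym \<sigma> i (Suc 0) + c" for c
    using hsym_Suc_Suc[of "\<sigma>(i := c)" i 0] hsym_cong[of i "\<sigma>(i := c)" \<sigma>] by simp
  then show ?case by (simp only: hsym_degree_0) (simp add: algebra_simps)
next
  case (Suc j)
  define A where "A k = hsym (\<sigma>(i := a)) (Suc i) k" for k
  define B where "B k = hsym (\<sigma>(i := b)) (Suc i) k" for k
  define C where "C k = hsym (\<sigma>(i := a, Suc i := b)) (Suc (Suc i)) k" for k
  have "hsym (\<sigma>(i := c)) i k = hsym \<sigma> i k" for c k by (rule hsym_cong) simp
  then have A: "A (Suc (Suc j)) = hsym \<sigma> i (Suc (Suc j)) + a * A (Suc j)"
    and B: "B (Suc (Suc j)) = hsym \<sigma> i (Suc (Suc j)) + b * B (Suc j)"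
    unfolding A_def B_def by (simp_all add: hsym_Suc_Suc)
  have "hsym (\<sigma>(i := a, Suc i := b)) (Suc i) k = A k" for k
    unfolding A_def by (rule hsym_cong) simp
  then have C: "C (Suc j) = A (Suc j) + b * C j"
    unfolding C_def by (subst hsym_Suc_Suc) simp
  have "A (Suc j) - B (Suc j) = (a - b) * C j"
    using Suc.IH by (simp add: A_def B_def C_def fun_upd_def)
  then have B_Suc: "B (Suc j) = A (Suc j) - (a - b) * C j" by (simp add: algebra_simps)
  have "A (Suc (Suc j)) - B (Suc (Suc j)) = (a - b) * C (Suc j)"
    unfolding A B C B_Suc by (simp add: algebra_simps)
  then show ?case by (simp add: A_def B_def C_def fun_upd_def)
qed

text \<open>With \<open>c\<close> the coefficients of \<open>u\<close>, \<open>gsym d c \<sigma> i\<close> is \<open>g\<^sub>i\<close> evaluated at \<open>\<sigma>\<close>; in particular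
  \<open>gsym d c \<sigma> 1 = u(\<sigma> 0)\<close>.\<close>

definition gsym :: "nat \<Rightarrow> (nat \<Rightarrow> 'b::comm_ring_1) \<Rightarrow> (nat \<Rightarrow> 'b) \<Rightarrow> nat \<Rightarrow> 'b" where
  "gsym d c \<sigma> i = (\<Sum>k\<in>{i - 1..d}. c k * hsym \<sigma> i (k + 1 - i))"

lemma gsym_divided_difference:
  assumes "Suc j \<le> d"
  shows "gsym d c (\<sigma>(j := a)) (Suc j) - gsym d c (\<sigma>(j := b)) (Suc j)
     = (a - b) * gsym d c (\<sigma>(j := a, Suc j := b)) (Suc (Suc j))"
proof -
  have "gsym d c \<tau> (Suc j) = c j + (\<Sum>k\<in>{Suc j..d}. c k * hsym \<tau> (Suc j) (Suc (k - Suc j)))"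
    for \<tau>
  proof -
    have "{j..d} = insert j {Suc j..d}" using assms by auto
    then show ?thesis unfolding gsym_def by (simp add: Suc_diff_Suc)
  qed
  then have "gsym d c (\<sigma>(j := a)) (Suc j) - gsym d c (\<sigma>(j := b)) (Suc j)
     = (\<Sum>k\<in>{Suc j..d}. c k * (hsym (\<sigma>(j := a)) (Suc j) (Suc (k - Suc j))
         - hsym (\<sigma>(j := b)) (Suc j) (Suc (k - Suc j))))"
    by (simp add: sum_subtractf[symmetric] right_diff_distrib)
  also have "\<dots> = (a - b) * gsym d c (\<sigma>(j := a, Suc j := b)) (Suc (Suc j))"
    unfolding gsym_def hsym_divided_difference by (simp add: sum_distrib_left algebra_simps)
  finally show ?thesis .
qed

lemma esym_0: "finite V \<Longrightarrow> esym V 0 = 1"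
  by (simp add: esym_def finite_subset cong: conj_cong)

lemma prod_minus_Var_eq_esym:
  fixes t :: "'a::comm_ring_1 mpoly"
  assumes "finite V" "card V = d"
  shows "(\<Prod>v\<in>V. t - Var v) = (\<Sum>k\<in>{0..d}. (-1) ^ (d - k) * esym V (d - k) * t ^ k)"
proof -
  have "(\<Prod>v\<in>V. t - Var v) = (\<Prod>v\<in>V. - Var v + t)" by simp
  also have "\<dots> = (\<Sum>S\<in>Pow V. (\<Prod>v\<in>S. - Var v) * (\<Prod>v\<in>V - S. t))"
    by (rule prod_add) (rule assms)
  also have "\<dots> = (\<Sum>S\<in>Pow V. (-1) ^ card S * (\<Prod>v\<in>S. Var v) * t ^ (d - card S))"
    using assms by (intro sum.cong refl) (auto simp: prod_uminus card_Diff_subset finite_subset)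
  also have "\<dots> = (\<Sum>s\<in>{0..d}. \<Sum>S\<in>{S \<in> Pow V. card S = s}.
      (-1) ^ card S * (\<Prod>v\<in>S. Var v) * t ^ (d - card S))"
    by (rule sum.group[symmetric]) (use assms in \<open>auto intro: card_mono\<close>)
  also have "\<dots> = (\<Sum>s\<in>{0..d}. (-1) ^ s * esym V s * t ^ (d - s))"
    by (intro sum.cong refl)
      (simp add: esym_def sum_distrib_left sum_distrib_right mult_ac Pow_def conj_commute)
  also have "\<dots> = (\<Sum>k\<in>{0..d}. (-1) ^ (d - k) * esym V (d - k) * t ^ k)"
    by (subst sum.atLeastAtMost_rev) (intro sum.cong refl, simp)
  finally show ?thesis .
qed

text \<open>Coefficients of \<open>u = \<Prod>\<^bsub>y\<in>V\<^esub> (x - y)\<close> as a polynomial in \<open>x\<close>.\<close>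

definition u_coeff :: "nat set \<Rightarrow> nat \<Rightarrow> nat \<Rightarrow> 'a::comm_ring_1 mpoly" where
  "u_coeff V d k = (-1) ^ (d - k) * esym V (d - k)"

lemma gsym_u_coeff_eq_0:
  fixes \<sigma> :: "nat \<Rightarrow> 'a::idom mpoly"
  assumes V: "finite V" "card V = d"
    and "1 \<le> i" "i \<le> d"
    and "inj_on a {0..<i}" "a ` {0..<i} \<subseteq> V" "\<And>v. v < i \<Longrightarrow> \<sigma> v = Var (a v)"
  shows "gsym d (u_coeff V d) \<sigma> i = 0"
  using assms(3-)
proof (induction i arbitrary: \<sigma> a rule: nat_induct_at_least)
  case base
  have "gsym d (u_coeff V d) \<sigma> 1 = (\<Sum>k\<in>{0..d}. (-1) ^ (d - k) * esym V (d - k) * \<sigma> 0 ^ k)"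
    by (simp add: gsym_def u_coeff_def hsym_1)
  also have "\<dots> = (\<Prod>v\<in>V. \<sigma> 0 - Var v)"
    by (rule prod_minus_Var_eq_esym[symmetric, OF V])
  also have "\<dots> = 0" using base V(1) by (auto intro!: bexI[of _ "a 0"])
  finally show ?case .
next
  case (Suc i)
  then obtain j where j: "i = Suc j" by (cases i) auto
  note IH = Suc.IH[unfolded j]
  let ?a' = "a(j := a (Suc j))"
  have inj: "x = y" if "x < Suc (Suc j)" "y < Suc (Suc j)" "a x = a y" for x y
    using Suc.prems(2) that by (auto simp: j inj_on_def)
  have "gsym d (u_coeff V d) (\<sigma>(j := \<sigma> j)) (Suc j) = 0"
    by (rule IH[where a = a]) (use Suc.prems in \<open>auto simp: j inj_on_def\<close>)
  moreover have "gsym d (u_coeff V d) (\<sigma>(j := \<sigma> (Suc j))) (Suc j) = 0"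
  proof (rule IH[where a = ?a'])
    show "inj_on ?a' {0..<Suc j}"
    proof (rule inj_onI)
      fix x y assume "x \<in> {0..<Suc j}" "y \<in> {0..<Suc j}" "?a' x = ?a' y"
      then show "x = y"
        using inj[of x y] inj[of x "Suc j"] inj[of "Suc j" y] by (auto simp: j split: if_splits)
    qed
  qed (use Suc.prems in \<open>auto simp: j\<close>)
  moreover have "\<sigma> j - \<sigma> (Suc j) \<noteq> 0"
    using inj[of j "Suc j"] Suc.prems(4)[of j] Suc.prems(4)[of "Suc j"]
    by (auto simp: j Var_inject)
  ultimately show ?case
    using gsym_divided_difference[of j d "u_coeff V d" \<sigma> "\<sigma> j" "\<sigma> (Suc j)"] Suc.prems(1) Suc.hyps
    by (simp add: j)
qed

lemma vars_esym: "vars (esym V k) \<subseteq> V"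
  unfolding esym_def by (intro vars_sum_subset vars_prod_subset) auto

lemma subst_gpol:
  assumes "1 \<le> i" "i \<le> d" "\<And>v. v \<in> Yvars n d \<Longrightarrow> \<sigma> v = Var v"
  shows "subst \<sigma> (gpol n d i) = gsym d (u_coeff (Yvars n d) d) \<sigma> i"
proof -
  have esym: "subst \<sigma> (esym (Yvars n d) k) = esym (Yvars n d) k" for k
    by (rule subst_eq_self) (use vars_esym assms(3) in blast)
  have "subst \<sigma> (gpol n d i) = hsym \<sigma> i (d + 1 - i) +
     (\<Sum>k\<in>{i - 1..d - 1}. (-1) ^ (d - k) * esym (Yvars n d) (d - k) * hsym \<sigma> i (k + 1 - i))"
    by (simp add: gpol_def subst_add subst_sum subst_mult subst_power subst_uminus esym
        subst_hcomp)
  also have "\<dots> = gsym d (u_coeff (Yvars n d) d) \<sigma> i"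
  proof -
    have split: "{i - 1..d} = insert d {i - 1..d - 1}" using assms by auto
    show ?thesis
      unfolding gsym_def u_coeff_def split using assms by (subst sum.insert) (auto simp: esym_0)
  qed
  finally show ?thesis .
qed

lemma subst_assign_gpol:
  assumes "1 \<le> i" "i \<le> n" "n \<le> d" "inj_on a {0..<n}" "a ` {0..<n} \<subseteq> Yvars n d"
  shows "subst (assign n a) (gpol n d i :: 'a::idom mpoly) = 0"
proof -
  have "subst (assign n a) (gpol n d i :: 'a mpoly) = gsym d (u_coeff (Yvars n d) d) (assign n a) i"
    by (rule subst_gpol) (use assms in \<open>auto simp: assign_def\<close>)
  also have "\<dots> = 0"
    by (rule gsym_u_coeff_eq_0[where a = a])
      (use assms in \<open>auto simp: assign_def intro: inj_on_subset\<close>)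
  finally show ?thesis .
qed

section \<open>Existence and uniqueness of the normal form\<close>

definition in_gideal :: "nat \<Rightarrow> nat \<Rightarrow> 'a::comm_ring_1 mpoly \<Rightarrow> bool" where
  "in_gideal n d q \<longleftrightarrow> (\<exists>c. q = (\<Sum>i\<in>{1..n}. c i * gpol n d i))"

lemma in_gideal_0 [simp]: "in_gideal n d 0"
  unfolding in_gideal_def by (rule exI[of _ "\<lambda>_. 0"]) simp

lemma in_gideal_add:
  assumes "in_gideal n d p" "in_gideal n d q"
  shows "in_gideal n d (p + q)"
proof -
  obtain c c' where "p = (\<Sum>i\<in>{1..n}. c i * gpol n d i)" "q = (\<Sum>i\<in>{1..n}. c' i * gpol n d i)"
    using assms by (auto simp: in_gideal_def)
  then have "p + q = (\<Sum>i\<in>{1..n}. (c i + c' i) * gpol n d i)"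
    by (simp add: sum.distrib distrib_right)
  then show ?thesis unfolding in_gideal_def by (rule exI[of _ "\<lambda>i. c i + c' i"])
qed

lemma in_gideal_mult:
  assumes "in_gideal n d q"
  shows "in_gideal n d (p * q)"
proof -
  obtain c where "q = (\<Sum>i\<in>{1..n}. c i * gpol n d i)"
    using assms by (auto simp: in_gideal_def)
  then have "p * q = (\<Sum>i\<in>{1..n}. (p * c i) * gpol n d i)"
    by (simp add: sum_distrib_left mult.assoc)
  then show ?thesis unfolding in_gideal_def by (rule exI[of _ "\<lambda>i. p * c i"])
qed

lemma in_gideal_diff: "in_gideal n d p \<Longrightarrow> in_gideal n d q \<Longrightarrow> in_gideal n d (p - q)"
  using in_gideal_add[of n d p "- q"] in_gideal_mult[of n d q "- 1"] by simp

lemma in_gideal_sum: "(\<And>x. x \<in> A \<Longrightarrow> in_gideal n d (f x)) \<Longrightarrow> in_gideal n d (sum f A)"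
  by (induction A rule: infinite_finite_induct) (simp_all add: in_gideal_add)

lemma in_gideal_gpol:
  assumes "i \<in> {1..n}"
  shows "in_gideal n d (gpol n d i)"
proof -
  have "gpol n d i = (\<Sum>j\<in>{1..n}. if j = i then gpol n d j else 0)"
    using assms by simp
  also have "\<dots> = (\<Sum>j\<in>{1..n}. (if j = i then 1 else 0) * gpol n d j)"
    by (intro sum.cong) auto
  finally show ?thesis unfolding in_gideal_def by (rule exI[of _ "\<lambda>j. if j = i then 1 else 0"])
qed

lemma subst_assign_in_gideal:
  assumes "in_gideal n d q" "n \<le> d" "inj_on a {0..<n}" "a ` {0..<n} \<subseteq> Yvars n d"
  shows "subst (assign n a) (q :: 'a::idom mpoly) = 0"
proof -
  obtain c where q: "q = (\<Sum>i\<in>{1..n}. c i * gpol n d i)"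
    using assms(1) by (auto simp: in_gideal_def)
  have "subst (assign n a) (gpol n d i :: 'a mpoly) = 0" if "i \<in> {1..n}" for i
    using that by (intro subst_assign_gpol assms(2-4)) auto
  then show ?thesis by (simp add: q subst_sum subst_mult)
qed

lemma reduced_G_0 [simp]: "reduced_G n d 0"
  by (simp add: reduced_G_def)

lemma reduced_G_uminus: "reduced_G n d p \<Longrightarrow> reduced_G n d (- p)"
  by (simp add: reduced_G_def)

lemma reduced_G_Const_mult: "reduced_G n d p \<Longrightarrow> reduced_G n d (Const c * p)"
  using keys_mult[of "Const c" p] by (auto simp: reduced_G_def Const_def split: if_splits)

lemma reduced_G_add: "reduced_G n d p \<Longrightarrow> reduced_G n d q \<Longrightarrow> reduced_G n d (p + q)"
  using keys_add[of p q] by (auto simp: reduced_G_def)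

lemma reduced_G_sum: "(\<And>x. x \<in> A \<Longrightarrow> reduced_G n d (f x)) \<Longrightarrow> reduced_G n d (sum f A)"
  by (induction A rule: infinite_finite_induct) (simp_all add: reduced_G_add)

lemma reduced_G_imp_wdeg_le:
  "reduced_G n d r \<Longrightarrow> v < n \<Longrightarrow> wdeg_le (var_weight v) (d - v - 1) r"
  unfolding reduced_G_def wdeg_le_var_weight_iff
  by (auto dest!: bspec[where x = "Suc v"])

text \<open>Termination of division by \<open>G(s(Y))\<close>: the variable \<open>v < n\<close> (that is, \<open>x\<^bsub>v+1\<^esub>\<close>) has weight
  \<open>(d + 1)\<^sup>v\<close> and the variables of \<open>Y\<close> have weight \<open>0\<close>. Under it the leading monomial \<open>x\<^sub>i\<^bsup>d-i+1\<^esup>\<close>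
  of \<open>g\<^sub>i\<close> is strictly heavier than all other monomials of \<open>g\<^sub>i\<close>, so each reduction step lowers
  the weight.\<close>

definition reduction_weight :: "nat \<Rightarrow> nat \<Rightarrow> nat \<Rightarrow> nat" where
  "reduction_weight n d v = (if v < n then Suc d ^ v else 0)"

definition gpol_lead :: "nat \<Rightarrow> nat \<Rightarrow> (nat \<Rightarrow>\<^sub>0 nat)" where
  "gpol_lead d i = Poly_Mapping.single (i - 1) (d + 1 - i)"

lemma mweight_reduction_weight:
  assumes "m \<in> monoms_of_degree i j" "i \<le> n"
  shows "mweight (reduction_weight n d) m = (\<Sum>v<i. Poly_Mapping.lookup m v * Suc d ^ v)"
proof -
  have "mweight (reduction_weight n d) m = (\<Sum>v<i. Poly_Mapping.lookup m v * reduction_weight n d v)"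
    by (rule mweight_superset) (use assms in \<open>auto simp: monoms_of_degree_iff\<close>)
  also have "\<dots> = (\<Sum>v<i. Poly_Mapping.lookup m v * Suc d ^ v)"
    using assms by (intro sum.cong) (auto simp: reduction_weight_def)
  finally show ?thesis .
qed

lemma mweight_reduction_weight_le:
  assumes "m \<in> monoms_of_degree i j" "i \<le> n"
  shows "mweight (reduction_weight n d) m \<le> j * Suc d ^ (i - 1)"
proof -
  have "mweight (reduction_weight n d) m \<le> (\<Sum>v<i. Poly_Mapping.lookup m v * Suc d ^ (i - 1))"
    unfolding mweight_reduction_weight[OF assms]
    by (intro sum_mono mult_le_mono2 power_increasing) auto
  also have "\<dots> = j * Suc d ^ (i - 1)"
    using assms(1) by (simp add: monoms_of_degree_iff sum_distrib_right[symmetric])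
  finally show ?thesis .
qed

lemma mweight_reduction_weight_less:
  assumes "m \<in> monoms_of_degree (Suc k) j" "Suc k \<le> n" "n \<le> d"
    and "m \<noteq> Poly_Mapping.single k j"
  shows "mweight (reduction_weight n d) m < j * Suc d ^ k"
proof -
  define s where "s = (\<Sum>v<k. Poly_Mapping.lookup m v)"
  have keys: "Poly_Mapping.keys m \<subseteq> {0..<Suc k}" and s_j: "s + Poly_Mapping.lookup m k = j"
    using assms(1) by (auto simp: monoms_of_degree_iff s_def)
  have "s \<noteq> 0"
  proof
    assume "s = 0"
    then have "Poly_Mapping.lookup m v = Poly_Mapping.lookup (Poly_Mapping.single k j) v" for v
      using keys s_j
      by (cases v k rule: linorder_cases) (auto simp: s_def lookup_single in_keys_iff)
    then show False using assms(4) by (auto intro: poly_mapping_eqI)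
  qed
  then have "k \<noteq> 0" by (auto simp: s_def)
  have "(\<Sum>v<k. Poly_Mapping.lookup m v * Suc d ^ v)
      \<le> (\<Sum>v<k. Poly_Mapping.lookup m v * Suc d ^ (k - 1))"
    by (intro sum_mono mult_le_mono2 power_increasing) auto
  also have "\<dots> = s * Suc d ^ (k - 1)" by (simp add: s_def sum_distrib_right)
  also have "\<dots> < s * Suc d ^ k"
    using \<open>s \<noteq> 0\<close> \<open>k \<noteq> 0\<close> assms(2,3) by (simp add: power_strict_increasing)
  finally have "mweight (reduction_weight n d) m
      < s * Suc d ^ k + Poly_Mapping.lookup m k * Suc d ^ k"
    using mweight_reduction_weight[OF assms(1,2)] by simp
  also have "\<dots> = j * Suc d ^ k" using s_j by (simp flip: add_mult_distrib)
  finally show ?thesis .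
qed

lemma wdeg_le_esym_reduction_weight: "wdeg_le (reduction_weight n d) 0 (esym (Yvars n d) k)"
  unfolding esym_def
  by (intro wdeg_le_sum wdeg_le_prod_0 wdeg_le_Var) (auto simp: reduction_weight_def)

lemma wdeg_le_hcomp_reduction_weight:
  "i \<le> n \<Longrightarrow> wdeg_le (reduction_weight n d) (j * Suc d ^ (i - 1)) (hcomp i j)"
  unfolding hcomp_eq_sum_monoms Defs.monom_def
  by (intro wdeg_le_sum wdeg_le_single mweight_reduction_weight_le)

lemma gpol_eq_lead_plus_lighter:
  assumes "1 \<le> i" "i \<le> n" "n \<le> d"
  obtains R :: "'a::comm_ring_1 mpoly"
  where "gpol n d i = Poly_Mapping.single (gpol_lead d i) 1 + R"
    and "wdeg_le (reduction_weight n d) (mweight (reduction_weight n d) (gpol_lead d i) - 1) R"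
proof -
  define T where "T = d + 1 - i"
  define B where "B = Suc d ^ (i - 1)"
  have lead_weight: "mweight (reduction_weight n d) (gpol_lead d i) = T * B"
    using assms by (simp add: gpol_lead_def mweight_single reduction_weight_def T_def B_def)
  have lead_in: "gpol_lead d i \<in> monoms_of_degree i T"
    using assms by (auto simp: monoms_of_degree_iff gpol_lead_def T_def lookup_single when_def)
  define R where "R = (\<Sum>m\<in>monoms_of_degree i T - {gpol_lead d i}. Defs.monom m)
     + (\<Sum>k\<in>{i - 1..d - 1}. (-1) ^ (d - k) * esym (Yvars n d) (d - k) * hcomp i (k + 1 - i)
        :: 'a mpoly)"
  have "hcomp i T = Defs.monom (gpol_lead d i)
      + (\<Sum>m\<in>monoms_of_degree i T - {gpol_lead d i}. Defs.monom m)"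
    unfolding hcomp_eq_sum_monoms by (rule sum.remove[OF finite_monoms_of_degree lead_in])
  then have "gpol n d i = Poly_Mapping.single (gpol_lead d i) 1 + R"
    unfolding gpol_def R_def T_def[symmetric] by (simp add: Defs.monom_def add.assoc)
  moreover have "wdeg_le (reduction_weight n d) (T * B - 1) R"
    unfolding R_def
  proof (intro wdeg_le_add wdeg_le_sum)
    fix m assume m: "m \<in> monoms_of_degree i T - {gpol_lead d i}"
    obtain k where k: "i = Suc k" using assms(1) by (cases i) auto
    then have "gpol_lead d i = Poly_Mapping.single k T" by (simp add: gpol_lead_def T_def)
    then have "mweight (reduction_weight n d) m < T * B"
      using mweight_reduction_weight_less[of m k T n d] m assms by (simp add: B_def k)
    then show "wdeg_le (reduction_weight n d) (T * B - 1) (Defs.monom m)"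
      unfolding Defs.monom_def by (intro wdeg_le_single) simp
  next
    fix k assume k: "k \<in> {i - 1..d - 1}"
    have "(k + 1 - i) * B \<le> (T - 1) * B"
      using k assms by (intro mult_le_mono1) (auto simp: T_def)
    also have "\<dots> \<le> T * B - 1"
      by (simp add: B_def diff_mult_distrib diff_le_mono2)
    finally have "0 + 0 + (k + 1 - i) * B \<le> T * B - 1" by simp
    moreover have "wdeg_le (reduction_weight n d) (0 + 0 + (k + 1 - i) * B)
        ((-1) ^ (d - k) * esym (Yvars n d) (d - k) * hcomp i (k + 1 - i))"
      unfolding B_def
      by (intro wdeg_le_mult wdeg_le_power[where N = 0, simplified] wdeg_le_uminus
          wdeg_le_1 wdeg_le_esym_reduction_weight wdeg_le_hcomp_reduction_weight assms)
    ultimately show "wdeg_le (reduction_weight n d) (T * B - 1)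
        ((-1) ^ (d - k) * esym (Yvars n d) (d - k) * hcomp i (k + 1 - i))"
      by (rule wdeg_le_mono[rotated])
  qed
  ultimately show ?thesis using that lead_weight by simp
qed

text \<open>Division of a monomial by \<open>G(s(Y))\<close>, by induction on its weight: if \<open>x\<^sub>i\<^bsup>d-i+1\<^esup>\<close> divides
  \<open>m = m' x\<^sub>i\<^bsup>d-i+1\<^esup>\<close>, replace \<open>m\<close> by \<open>m' (x\<^sub>i\<^bsup>d-i+1\<^esup> - g\<^sub>i)\<close>, whose monomials are lighter.\<close>

lemma exists_reduced_monom:
  assumes "1 \<le> n" "n \<le> d"
  shows "\<exists>r. reduced_G n d r \<and> in_gideal n d (Poly_Mapping.single m 1 - r :: 'a::comm_ring_1 mpoly)"
proof (induction "mweight (reduction_weight n d) m" arbitrary: m rule: less_induct)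
  case less
  show ?case
  proof (cases "reduced_G n d (Poly_Mapping.single m (1::'a))")
    case True
    then show ?thesis by (intro exI[of _ "Poly_Mapping.single m 1"]) simp
  next
    case False
    then obtain i where i: "i \<in> {1..n}" "d + 1 - i \<le> Poly_Mapping.lookup m (i - 1)"
      by (auto simp: reduced_G_def not_less)
    define m' where
      "m' = Poly_Mapping.update (i - 1) (Poly_Mapping.lookup m (i - 1) - (d + 1 - i)) m"
    have m_eq: "m = m' + gpol_lead d i"
      by (rule poly_mapping_eqI)
        (use i in \<open>auto simp: m'_def gpol_lead_def lookup_add lookup_update lookup_single when_def\<close>)
    obtain R :: "'a mpoly" where R: "gpol n d i = Poly_Mapping.single (gpol_lead d i) 1 + R"
        "wdeg_le (reduction_weight n d) (mweight (reduction_weight n d) (gpol_lead d i) - 1) R"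
      using gpol_eq_lead_plus_lighter[of i n d] i assms by auto
    have "1 \<le> mweight (reduction_weight n d) (gpol_lead d i)"
      using i assms by (auto simp: gpol_lead_def mweight_single reduction_weight_def)
    then have "\<exists>r. reduced_G n d r \<and> in_gideal n d (Poly_Mapping.single (m' + x) 1 - r :: 'a mpoly)"
      if "x \<in> Poly_Mapping.keys R" for x
      using R(2) that by (intro less) (auto simp: wdeg_le_def m_eq mweight_add)
    then obtain f where f: "\<And>x. x \<in> Poly_Mapping.keys R \<Longrightarrow>
        reduced_G n d (f x) \<and> in_gideal n d (Poly_Mapping.single (m' + x) 1 - f x :: 'a mpoly)"
      by metis
    define r where "r = - (\<Sum>x\<in>Poly_Mapping.keys R. Const (Poly_Mapping.lookup R x) * f x)"
    have "reduced_G n d r"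
      unfolding r_def by (intro reduced_G_uminus reduced_G_sum reduced_G_Const_mult) (use f in auto)
    moreover have "Poly_Mapping.single m 1 - r = Poly_Mapping.single m' 1 * gpol n d i
        - (\<Sum>x\<in>Poly_Mapping.keys R.
            Const (Poly_Mapping.lookup R x) * (Poly_Mapping.single (m' + x) 1 - f x))"
    proof -
      have "Poly_Mapping.single m' 1 * R
          = (\<Sum>x\<in>Poly_Mapping.keys R.
              Const (Poly_Mapping.lookup R x) * Poly_Mapping.single (m' + x) 1)"
        by (subst poly_mapping_sum_single[of R]) (simp add: sum_distrib_left mult_single Const_def)
      moreover have "Poly_Mapping.single m 1
          = Poly_Mapping.single m' 1 * gpol n d i - Poly_Mapping.single m' 1 * R"
        by (simp add: R(1) m_eq mult_single algebra_simps)
      ultimately show ?thesis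
        by (simp add: r_def right_diff_distrib sum_subtractf diff_diff_eq2)
    qed
    moreover have "in_gideal n d \<dots>"
    proof (rule in_gideal_diff)
      show "in_gideal n d (Poly_Mapping.single m' 1 * gpol n d i)"
        using i(1) by (intro in_gideal_mult in_gideal_gpol)
      show "in_gideal n d (\<Sum>x\<in>Poly_Mapping.keys R.
          Const (Poly_Mapping.lookup R x) * (Poly_Mapping.single (m' + x) 1 - f x))"
        using f by (intro in_gideal_sum in_gideal_mult) auto
    qed
    ultimately show ?thesis by auto
  qed
qed

lemma exists_reduced:
  assumes "1 \<le> n" "n \<le> d"
  shows "\<exists>r. reduced_G n d r \<and> in_gideal n d (h - r :: 'a::comm_ring_1 mpoly)"
proof -
  have "\<forall>m. \<exists>r. reduced_G n d r \<and> in_gideal n d (Poly_Mapping.single m 1 - r :: 'a mpoly)"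
    using exists_reduced_monom[OF assms] by blast
  then obtain f where
    f: "\<And>m. reduced_G n d (f m) \<and> in_gideal n d (Poly_Mapping.single m 1 - f m :: 'a mpoly)"
    by metis
  define r where "r = (\<Sum>m\<in>Poly_Mapping.keys h. Const (Poly_Mapping.lookup h m) * f m)"
  have "reduced_G n d r"
    unfolding r_def by (intro reduced_G_sum reduced_G_Const_mult) (use f in auto)
  moreover have "h - r = (\<Sum>m\<in>Poly_Mapping.keys h.
      Const (Poly_Mapping.lookup h m) * (Poly_Mapping.single m 1 - f m))"
    by (subst (1) poly_mapping_sum_single[of h])
      (simp add: r_def algebra_simps sum_subtractf Const_def mult_single)
  then have "in_gideal n d (h - r)" by (simp add: in_gideal_sum in_gideal_mult f)
  ultimately show ?thesis by blast
qed

lemma eq_if_agree_at_Yvars: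
  fixes p q :: "'a::idom mpoly"
  assumes "n \<le> d"
    and "\<And>v. v < n \<Longrightarrow> wdeg_le (var_weight v) (d - v - 1) p"
    and "\<And>v. v < n \<Longrightarrow> wdeg_le (var_weight v) (d - v - 1) q"
    and "\<And>a. inj_on a {0..<n} \<Longrightarrow> a ` {0..<n} \<subseteq> Yvars n d \<Longrightarrow>
      subst (assign n a) p = subst (assign n a) q"
  shows "p = q"
  by (rule eq_if_agree_at_assignments[of "Yvars n d" d n]) (use assms in auto)

lemma normal_form_G:
  fixes h :: "'a::idom mpoly"
  assumes "1 \<le> n" "n \<le> d"
  shows "reduced_G n d (normal_form_G n d h)" "in_gideal n d (h - normal_form_G n d h)"
proof -
  obtain r where r: "reduced_G n d r" "in_gideal n d (h - r)"
    using exists_reduced[OF assms] by blast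
  have "r' = r" if "reduced_G n d r'" "in_gideal n d (h - r')" for r'
  proof (rule eq_if_agree_at_Yvars[OF assms(2)])
    fix a assume a: "inj_on a {0..<n}" "a ` {0..<n} \<subseteq> Yvars n d"
    have "subst (assign n a) (h - r') = 0" "subst (assign n a) (h - r) = 0"
      using subst_assign_in_gideal[OF that(2) assms(2) a] subst_assign_in_gideal[OF r(2) assms(2) a]
      by auto
    then show "subst (assign n a) r' = subst (assign n a) r" by (simp add: subst_diff)
  qed (use that r reduced_G_imp_wdeg_le in blast)+
  then have "normal_form_G n d h = r"
    unfolding normal_form_G_def in_gideal_def[symmetric] using r by blast
  then show "reduced_G n d (normal_form_G n d h)" "in_gideal n d (h - normal_form_G n d h)"
    using r by simp_all
qed

lemma subst_assign_normal_form_G: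
  fixes h :: "'a::idom mpoly"
  assumes "1 \<le> n" "n \<le> d" "inj_on a {0..<n}" "a ` {0..<n} \<subseteq> Yvars n d"
  shows "subst (assign n a) (normal_form_G n d h) = subst (assign n a) h"
  using subst_assign_in_gideal[OF normal_form_G(2)[OF assms(1,2), of h] assms(2-4)]
  by (simp add: subst_diff)

lemma normal_form_G_eqI:
  fixes h q :: "'a::idom mpoly"
  assumes "1 \<le> n" "n \<le> d"
    and "\<And>v. v < n \<Longrightarrow> wdeg_le (var_weight v) (d - v - 1) q"
    and "\<And>a. inj_on a {0..<n} \<Longrightarrow> a ` {0..<n} \<subseteq> Yvars n d \<Longrightarrow>
      subst (assign n a) q = subst (assign n a) h"
  shows "q = normal_form_G n d h"
proof (rule eq_if_agree_at_Yvars[OF assms(2) assms(3)])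
  show "wdeg_le (var_weight v) (d - v - 1) (normal_form_G n d h)" if "v < n" for v
    using reduced_G_imp_wdeg_le[OF normal_form_G(1)[OF assms(1,2)] that] .
  show "subst (assign n a) q = subst (assign n a) (normal_form_G n d h)"
    if "inj_on a {0..<n}" "a ` {0..<n} \<subseteq> Yvars n d" for a
    using assms(4)[OF that] subst_assign_normal_form_G[OF assms(1,2) that, of h] by simp
qed

section \<open>Symmetry\<close>

lemma subst_assign_symmetric:
  assumes sym: "symmetric_in {0..<n} h"
    and a: "inj_on a {0..<n}" and b: "inj_on b {0..<n}" and ab: "a ` {0..<n} = b ` {0..<n}"
  shows "subst (assign n a) h = subst (assign n b) h"
proof -
  define \<pi> where "\<pi> v = (if v < n then inv_into {0..<n} b (a v) else v)" for v
  have "bij_betw (inv_into {0..<n} b \<circ> a) {0..<n} {0..<n}"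
    using a b ab by (intro bij_betw_trans[of _ _ "b ` {0..<n}"] bij_betw_inv_into)
      (auto simp: bij_betw_def)
  then have "bij_betw \<pi> {0..<n} {0..<n}"
    by (rule bij_betw_cong[THEN iffD1, rotated]) (simp add: \<pi>_def)
  then have perm: "\<pi> permutes {0..<n}"
    by (rule bij_imp_permutes) (simp add: \<pi>_def)
  have assign_a: "assign n a v = assign n b (\<pi> v)" for v
  proof (cases "v < n")
    case True
    then have "a v \<in> b ` {0..<n}" "\<pi> v < n" using ab permutes_in_image[OF perm, of v] by auto
    then show ?thesis using True by (simp add: assign_def \<pi>_def f_inv_into_f)
  qed (simp add: assign_def \<pi>_def)
  have "subst (assign n a) h = subst (assign n b) (rename \<pi> h)"
    unfolding subst_rename by (rule subst_cong) (rule assign_a)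
  also have "rename \<pi> h = h" using sym perm by (simp add: symmetric_in_def)
  finally show ?thesis .
qed

lemma normal_form_G_symmetric_X:
  fixes h :: "'a::idom mpoly"
  assumes "1 \<le> n" "n \<le> d" "symmetric_in (Xvars n) h"
    and deg: "\<And>v. v < n \<Longrightarrow> wdeg_le (var_weight v) (d - n) (normal_form_G n d h)"
  shows "symmetric_in (Xvars n) (normal_form_G n d h)"
  unfolding symmetric_in_def
proof (intro allI impI)
  fix \<pi> assume \<pi>: "\<pi> permutes Xvars n"
  let ?r = "normal_form_G n d h"
  show "rename \<pi> ?r = ?r"
  proof (rule normal_form_G_eqI[OF assms(1,2)])
    fix v assume v: "v < n"
    have "inv \<pi> v < n" using permutes_in_image[OF permutes_inv[OF \<pi>], of v] v by simp
    then have "wdeg_le (var_weight v) (d - n) (rename \<pi> ?r)"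
      by (intro wdeg_le_rename[OF \<pi>] deg)
    then show "wdeg_le (var_weight v) (d - v - 1) (rename \<pi> ?r)"
      using v by (auto elim: wdeg_le_mono)
  next
    fix a assume a: "inj_on a {0..<n}" "a ` {0..<n} \<subseteq> Yvars n d"
    have img: "(a \<circ> \<pi>) ` {0..<n} = a ` {0..<n}"
      unfolding image_comp[symmetric] permutes_image[OF \<pi>] ..
    have inj: "inj_on (a \<circ> \<pi>) {0..<n}"
      using a(1) permutes_inj_on[OF \<pi>] permutes_image[OF \<pi>] by (simp add: comp_inj_on)
    have "assign n a (\<pi> v) = assign n (a \<circ> \<pi>) v" for v
      using permutes_in_image[OF \<pi>] permutes_not_in[OF \<pi>] by (force simp: assign_def)
    then have "subst (assign n a) (rename \<pi> ?r) = subst (assign n (a \<circ> \<pi>)) ?r"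
      unfolding subst_rename by (intro subst_cong)
    also have "\<dots> = subst (assign n (a \<circ> \<pi>)) h"
      using subst_assign_normal_form_G[OF assms(1,2) inj] img a(2) by simp
    also have "\<dots> = subst (assign n a) h"
      by (rule subst_assign_symmetric[OF assms(3) inj a(1) img])
    finally show "subst (assign n a) (rename \<pi> ?r) = subst (assign n a) h" .
  qed
qed

lemma normal_form_G_symmetric_Y:
  fixes h :: "'a::idom mpoly"
  assumes "1 \<le> n" "n \<le> d" "vars h \<subseteq> Xvars n"
  shows "symmetric_in (Yvars n d) (normal_form_G n d h)"
  unfolding symmetric_in_def
proof (intro allI impI)
  fix \<sigma> assume \<sigma>: "\<sigma> permutes Yvars n d"
  let ?r = "normal_form_G n d h"
  have \<sigma>_X: "\<sigma> v = v" if "v < n" for v using permutes_not_in[OF \<sigma>] that by simp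
  have inv_\<sigma>: "inv \<sigma> permutes Yvars n d" by (rule permutes_inv[OF \<sigma>])
  show "rename \<sigma> ?r = ?r"
  proof (rule normal_form_G_eqI[OF assms(1,2)])
    fix v assume v: "v < n"
    have "inv \<sigma> v = v" using permutes_not_in[OF inv_\<sigma>] v by simp
    then show "wdeg_le (var_weight v) (d - v - 1) (rename \<sigma> ?r)"
      using reduced_G_imp_wdeg_le[OF normal_form_G(1)[OF assms(1,2)] v]
      by (intro wdeg_le_rename[OF \<sigma>]) simp
  next
    fix a assume a: "inj_on a {0..<n}" "a ` {0..<n} \<subseteq> Yvars n d"
    \<comment> \<open>renaming by \<open>\<sigma>\<close> turns the assignment \<open>b\<close> into \<open>a\<close>\<close>
    define b where "b = inv \<sigma> \<circ> a"
    have inj: "inj_on b {0..<n}"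
      unfolding b_def using a(1) permutes_inj_on[OF inv_\<sigma>] by (rule comp_inj_on)
    have img: "b ` {0..<n} \<subseteq> Yvars n d"
      using a(2) permutes_in_image[OF inv_\<sigma>] by (auto simp: b_def)
    have "assign n a (\<sigma> v) = rename \<sigma> (assign n b v)" for v
    proof (cases "v < n")
      case False
      then have "\<not> \<sigma> v < n"
        using permutes_in_image[OF \<sigma>, of v] permutes_not_in[OF \<sigma>, of v]
        by (cases "v \<in> Yvars n d") auto
      then show ?thesis using False by (simp add: assign_def)
    qed (simp add: assign_def \<sigma>_X b_def permutes_inverses[OF \<sigma>])
    then have "subst (assign n a) (rename \<sigma> ?r) = rename \<sigma> (subst (assign n b) ?r)"
      unfolding subst_rename rename_subst by (intro subst_cong)
    also have "\<dots> = rename \<sigma> (subst (assign n b) h)"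
      using subst_assign_normal_form_G[OF assms(1,2) inj img, of h] by simp
    also have "\<dots> = subst (assign n a) h"
      unfolding rename_subst
      by (rule subst_cong) (use assms(3) in \<open>auto simp: assign_def b_def permutes_inverses[OF \<sigma>]\<close>)
    finally show "subst (assign n a) (rename \<sigma> ?r) = subst (assign n a) h" .
  qed
qed

section \<open>The Lagrange interpolant\<close>

definition Ysubsets :: "nat \<Rightarrow> nat \<Rightarrow> nat set set" where
  "Ysubsets n d = {Y'. Y' \<subseteq> Yvars n d \<and> card Y' = n}"

text \<open>The summand of \<open>r\<^sub>Y(h)\<close> for \<open>Y'\<close> is \<open>h(Y') node_num(Y') / node_den(Y')\<close>. Multiplying by
  the product \<open>lagrange_den\<close> of all denominators turns \<open>r\<^sub>Y(h)\<close> into the polynomial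
  \<open>lagrange_num\<close>.\<close>

definition node_num :: "nat \<Rightarrow> nat \<Rightarrow> nat set \<Rightarrow> 'a::comm_ring_1 mpoly" where
  "node_num n d Y' = (\<Prod>x\<in>Xvars n. \<Prod>y'\<in>Yvars n d - Y'. Var x - Var y')"

definition node_den :: "nat \<Rightarrow> nat \<Rightarrow> nat set \<Rightarrow> 'a::comm_ring_1 mpoly" where
  "node_den n d Y' = (\<Prod>y\<in>Y'. \<Prod>y'\<in>Yvars n d - Y'. Var y - Var y')"

definition lagrange_den :: "nat \<Rightarrow> nat \<Rightarrow> 'a::comm_ring_1 mpoly" where
  "lagrange_den n d = (\<Prod>Y'\<in>Ysubsets n d. node_den n d Y')"

definition lagrange_num :: "nat \<Rightarrow> nat \<Rightarrow> 'a::comm_ring_1 mpoly \<Rightarrow> 'a mpoly" where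
  "lagrange_num n d h = (\<Sum>Y'\<in>Ysubsets n d.
     eval_at n Y' h * node_num n d Y' * (\<Prod>Y''\<in>Ysubsets n d - {Y'}. node_den n d Y''))"

lemma finite_Ysubsets: "finite (Ysubsets n d)"
  unfolding Ysubsets_def by (rule finite_subset[of _ "Pow (Yvars n d)"]) auto

lemma Ysubsets_imp_finite: "Y' \<in> Ysubsets n d \<Longrightarrow> finite Y'"
  unfolding Ysubsets_def by (auto intro: finite_subset)

lemma image_in_Ysubsets:
  "inj_on a {0..<n} \<Longrightarrow> a ` {0..<n} \<subseteq> Yvars n d \<Longrightarrow> a ` {0..<n} \<in> Ysubsets n d"
  by (simp add: Ysubsets_def card_image)

lemma node_den_nonzero: "Y' \<in> Ysubsets n d \<Longrightarrow> (node_den n d Y' :: 'a::idom mpoly) \<noteq> 0"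
  unfolding node_den_def
  by (auto simp: prod_zero_iff Var_inject Ysubsets_imp_finite dest: Var_diff_nonzero)

lemma lagrange_den_nonzero: "(lagrange_den n d :: 'a::idom mpoly) \<noteq> 0"
  unfolding lagrange_den_def by (simp add: prod_zero_iff finite_Ysubsets node_den_nonzero)

lemma lagrange_den_eq:
  "Y' \<in> Ysubsets n d \<Longrightarrow>
     lagrange_den n d = node_den n d Y' * (\<Prod>Y''\<in>Ysubsets n d - {Y'}. node_den n d Y'')"
  unfolding lagrange_den_def using finite_Ysubsets by (rule prod.remove)

lemma fr_mult: "fr (p * q) = fr p * fr (q :: 'a::idom mpoly)"
  by simp

lemma fr_add: "fr (p + q) = fr p + fr (q :: 'a::idom mpoly)"
  by simp

lemma fr_sum: "fr (sum f A) = (\<Sum>x\<in>A. fr (f x :: 'a::idom mpoly))"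
  by (induction A rule: infinite_finite_induct) (simp_all add: Zero_fract_def fr_add del: add_fract)

lemma lagrange_rY_eq:
  fixes h :: "'a::idom mpoly"
  shows "lagrange_rY n d h = fr (lagrange_num n d h) / fr (lagrange_den n d)"
proof -
  let ?E = "\<lambda>Y'. eval_at n Y' h" and ?N = "node_num n d" and ?D = "node_den n d"
  let ?D' = "\<lambda>Y'. \<Prod>Y''\<in>Ysubsets n d - {Y'}. ?D Y''"
  have summand: "fr (lagrange_den n d) * (fr (?E Y') * fr (?N Y') / fr (?D Y'))
      = fr (?E Y') * fr (?N Y') * fr (?D' Y')" if "Y' \<in> Ysubsets n d" for Y'
  proof -
    have "fr (?D Y') \<noteq> 0" using node_den_nonzero[OF that] by (simp add: Zero_fract_def eq_fract)
    moreover have "fr (lagrange_den n d) = fr (?D Y') * fr (?D' Y')"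
      by (simp add: lagrange_den_eq[OF that])
    ultimately show ?thesis
      by (metis (no_types, lifting) mult.commute nonzero_mult_div_cancel_left times_divide_eq_right)
  qed
  then have "fr (lagrange_den n d) * (\<Sum>Y'\<in>Ysubsets n d. fr (?E Y') * fr (?N Y') / fr (?D Y'))
      = fr (lagrange_num n d h)"
    unfolding sum_distrib_left lagrange_num_def fr_sum fr_mult by (intro sum.cong refl summand)
  moreover have "lagrange_rY n d h = (\<Sum>Y'\<in>Ysubsets n d. fr (?E Y') * fr (?N Y') / fr (?D Y'))"
    unfolding lagrange_rY_def Ysubsets_def node_num_def node_den_def ..
  moreover have "fr (lagrange_den n d :: 'a mpoly) \<noteq> 0"
    using lagrange_den_nonzero by (simp add: Zero_fract_def eq_fract)
  ultimately show ?thesis by (simp add: field_simps del: mult_fract divide_fract)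
qed

lemma eval_at_eq_subst_assign: "eval_at n Y' h = subst (assign n ((!) (sorted_list_of_set Y'))) h"
  unfolding eval_at_def assign_def[abs_def] ..

lemma sorted_list_of_set_nth_bij:
  assumes "finite Y'" "card Y' = n"
  shows "inj_on ((!) (sorted_list_of_set Y')) {0..<n}" "(!) (sorted_list_of_set Y') ` {0..<n} = Y'"
  using bij_betw_nth[of "sorted_list_of_set Y'" "{0..<n}" Y'] assms
  by (simp_all add: bij_betw_def atLeast0LessThan)

lemma vars_eval_at:
  assumes "vars h \<subseteq> Xvars n" "finite Y'" "card Y' = n"
  shows "vars (eval_at n Y' h) \<subseteq> Y'"
  unfolding eval_at_eq_subst_assign
  by (rule vars_subst_subset)
    (use assms sorted_list_of_set_nth_bij[OF assms(2,3)] in \<open>auto simp: assign_def\<close>)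

lemma vars_node_den: "Y' \<subseteq> Yvars n d \<Longrightarrow> vars (node_den n d Y') \<subseteq> Yvars n d"
  unfolding node_den_def by (intro vars_prod_subset vars_diff_subset) auto

lemma vars_lagrange_den: "vars (lagrange_den n d) \<subseteq> Yvars n d"
  unfolding lagrange_den_def by (intro vars_prod_subset vars_node_den) (auto simp: Ysubsets_def)

lemma vars_lagrange_num:
  assumes "vars h \<subseteq> Xvars n"
  shows "vars (lagrange_num n d h) \<subseteq> Xvars n \<union> Yvars n d"
  unfolding lagrange_num_def
proof (intro vars_sum_subset vars_mult_subset vars_prod_subset)
  fix Y' assume "Y' \<in> Ysubsets n d"
  then show "vars (eval_at n Y' h) \<subseteq> Xvars n \<union> Yvars n d"
    using vars_eval_at[OF assms Ysubsets_imp_finite] by (auto simp: Ysubsets_def)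
  show "vars (node_num n d Y') \<subseteq> Xvars n \<union> Yvars n d"
    unfolding node_num_def by (intro vars_prod_subset vars_diff_subset) auto
  show "vars (node_den n d Y'') \<subseteq> Xvars n \<union> Yvars n d" if "Y'' \<in> Ysubsets n d - {Y'}" for Y''
    using vars_node_den[of Y'' n d] that by (auto simp: Ysubsets_def)
qed

lemma card_Yvars_diff_Ysubset: "Y' \<in> Ysubsets n d \<Longrightarrow> card (Yvars n d - Y') = d - n"
  using Ysubsets_imp_finite[of Y' n d] by (simp add: Ysubsets_def card_Diff_subset)

lemma wdeg_le_node_num:
  assumes "Y' \<in> Ysubsets n d" "v < n"
  shows "wdeg_le (var_weight v) (d - n) (node_num n d Y')"
proof -
  have "wdeg_le (var_weight v) (\<Sum>y'\<in>Yvars n d - Y'. var_weight v x)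
      (\<Prod>y'\<in>Yvars n d - Y'. Var x - Var y')" for x
    by (rule wdeg_le_prod)
      (use assms(2) in \<open>auto intro!: wdeg_le_diff wdeg_le_Var simp: var_weight_def\<close>)
  then have "wdeg_le (var_weight v) (\<Sum>x\<in>Xvars n. \<Sum>y'\<in>Yvars n d - Y'. var_weight v x)
      (node_num n d Y')"
    unfolding node_num_def by (rule wdeg_le_prod)
  also have "(\<Sum>x\<in>Xvars n. \<Sum>y'\<in>Yvars n d - Y'. var_weight v x)
      = card (Yvars n d - Y') * (\<Sum>x\<in>Xvars n. var_weight v x)"
    by (simp add: sum_distrib_left)
  also have "(\<Sum>x\<in>Xvars n. var_weight v x) = 1"
    using assms(2) by (simp add: var_weight_def)
  also have "card (Yvars n d - Y') = d - n"
    using assms(1) by (rule card_Yvars_diff_Ysubset)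
  finally show ?thesis by simp
qed

lemma wdeg_le_lagrange_num:
  assumes "vars h \<subseteq> Xvars n" "v < n"
  shows "wdeg_le (var_weight v) (d - n) (lagrange_num n d h)"
  unfolding lagrange_num_def
proof (intro wdeg_le_sum)
  fix Y' assume Y': "Y' \<in> Ysubsets n d"
  have "vars (eval_at n Y' h) \<subseteq> Yvars n d"
    using vars_eval_at[OF assms(1) Ysubsets_imp_finite[OF Y']] Y' by (auto simp: Ysubsets_def)
  moreover have "vars (\<Prod>Y''\<in>Ysubsets n d - {Y'}. node_den n d Y'') \<subseteq> Yvars n d"
    by (intro vars_prod_subset vars_node_den) (auto simp: Ysubsets_def)
  ultimately have "wdeg_le (var_weight v) (0 + (d - n) + 0)
      (eval_at n Y' h * node_num n d Y' * (\<Prod>Y''\<in>Ysubsets n d - {Y'}. node_den n d Y''))"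
    using assms(2)
    by (intro wdeg_le_mult wdeg_le_node_num[OF Y' assms(2)] vars_subset_imp_wdeg_le_0) auto
  then show "wdeg_le (var_weight v) (d - n)
      (eval_at n Y' h * node_num n d Y' * (\<Prod>Y''\<in>Ysubsets n d - {Y'}. node_den n d Y''))"
    by simp
qed

lemma subst_assign_eq_self: "vars p \<inter> {0..<k} = {} \<Longrightarrow> subst (assign k a) p = p"
  by (rule subst_eq_self) (auto simp: assign_def)

lemma subst_assign_node_num:
  assumes "inj_on a {0..<n}" "a ` {0..<n} \<subseteq> Yvars n d" "Y' \<in> Ysubsets n d"
  shows "subst (assign n a) (node_num n d Y')
    = (if Y' = a ` {0..<n} then node_den n d Y' else 0)"
proof -
  have "subst (assign n a) (node_num n d Y')
      = (\<Prod>x\<in>{0..<n}. \<Prod>y'\<in>Yvars n d - Y'. Var (a x) - Var y')"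
    by (simp add: node_num_def subst_prod subst_diff assign_def)
  also have "\<dots> = (\<Prod>y\<in>a ` {0..<n}. \<Prod>y'\<in>Yvars n d - Y'. Var y - Var y')"
    unfolding prod.reindex[OF assms(1)] comp_def ..
  also have "\<dots> = (if Y' = a ` {0..<n} then node_den n d Y' else 0)"
  proof (cases "Y' = a ` {0..<n}")
    case False
    have "card (a ` {0..<n}) = card Y'" using assms by (simp add: card_image Ysubsets_def)
    then have "\<not> a ` {0..<n} \<subseteq> Y'"
      using False card_subset_eq[OF Ysubsets_imp_finite[OF assms(3)]] by blast
    then obtain y where "y \<in> a ` {0..<n}" "y \<in> Yvars n d - Y'" using assms(2) by blast
    then show ?thesis using False by (auto intro!: prod_zero bexI[of _ y])
  qed (simp add: node_den_def)
  finally show ?thesis .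
qed

lemma subst_assign_lagrange_num:
  fixes h :: "'a::comm_ring_1 mpoly"
  assumes h: "vars h \<subseteq> Xvars n" "symmetric_in (Xvars n) h"
    and a: "inj_on a {0..<n}" "a ` {0..<n} \<subseteq> Yvars n d"
  shows "subst (assign n a) (lagrange_num n d h) = lagrange_den n d * subst (assign n a) h"
proof -
  define A where "A = a ` {0..<n}"
  have A: "A \<in> Ysubsets n d" unfolding A_def using a by (rule image_in_Ysubsets)
  have fixed: "subst (assign n a) p = p" if "vars p \<subseteq> Yvars n d" for p
    using that by (intro subst_assign_eq_self) auto
  have "subst (assign n a) (lagrange_num n d h) = (\<Sum>Y'\<in>Ysubsets n d.
      eval_at n Y' h * subst (assign n a) (node_num n d Y')
      * (\<Prod>Y''\<in>Ysubsets n d - {Y'}. node_den n d Y''))"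
    unfolding lagrange_num_def subst_sum subst_mult
  proof (intro sum.cong refl arg_cong2[where f = "(*)"])
    fix Y' assume "Y' \<in> Ysubsets n d"
    then show "subst (assign n a) (eval_at n Y' h) = eval_at n Y' h"
      using vars_eval_at[OF h(1) Ysubsets_imp_finite] by (intro fixed) (auto simp: Ysubsets_def)
    show "subst (assign n a) (\<Prod>Y''\<in>Ysubsets n d - {Y'}. node_den n d Y'')
        = (\<Prod>Y''\<in>Ysubsets n d - {Y'}. node_den n d Y'')"
      by (intro fixed vars_prod_subset vars_node_den) (auto simp: Ysubsets_def)
  qed
  also have "\<dots> = eval_at n A h * node_den n d A * (\<Prod>Y''\<in>Ysubsets n d - {A}. node_den n d Y'')"
  proof -
    have "subst (assign n a) (node_num n d Y' :: 'a mpoly) = 0" if "Y' \<in> Ysubsets n d - {A}" for Y'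
      using subst_assign_node_num[OF a, of Y'] that by (simp add: A_def)
    then have "(\<Sum>Y'\<in>Ysubsets n d - {A}. eval_at n Y' h * subst (assign n a) (node_num n d Y')
        * (\<Prod>Y''\<in>Ysubsets n d - {Y'}. node_den n d Y'')) = 0"
      by (intro sum.neutral) simp
    moreover have "subst (assign n a) (node_num n d A :: 'a mpoly) = node_den n d A"
      using subst_assign_node_num[OF a A] by (simp add: A_def)
    ultimately show ?thesis by (simp add: sum.remove[OF finite_Ysubsets A])
  qed
  also have "\<dots> = eval_at n A h * lagrange_den n d"
    by (simp add: lagrange_den_eq[OF A] mult.assoc)
  also have "eval_at n A h = subst (assign n a) h"
  proof -
    have "finite A" "card A = n" using A Ysubsets_imp_finite[OF A] by (simp_all add: Ysubsets_def)
    note nth = sorted_list_of_set_nth_bij[OF this]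
    show ?thesis
      unfolding eval_at_eq_subst_assign
      by (rule subst_assign_symmetric[OF h(2) nth(1) a(1)]) (use nth(2) in \<open>simp add: A_def\<close>)
  qed
  finally show ?thesis by (simp add: mult.commute)
qed

text \<open>Both sides have degree \<open>\<le> d - i\<close> in each \<open>x\<^sub>i\<close> and take the value \<open>D \<cdot> h(a(X))\<close> at each
  assignment \<open>a\<close>.\<close>

lemma lagrange_num_eq_normal_form_G:
  fixes h :: "'a::idom mpoly"
  assumes "1 \<le> n" "n \<le> d" "vars h \<subseteq> Xvars n" "symmetric_in (Xvars n) h"
  shows "lagrange_num n d h = lagrange_den n d * normal_form_G n d h"
proof (rule eq_if_agree_at_Yvars[OF assms(2)])
  fix v assume v: "v < n"
  show "wdeg_le (var_weight v) (d - v - 1) (lagrange_num n d h)"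
    using wdeg_le_lagrange_num[OF assms(3) v, where d = d] by (rule wdeg_le_mono) (use v in simp)
  have "v \<notin> vars (lagrange_den n d :: 'a mpoly)" using vars_lagrange_den v by fastforce
  then show "wdeg_le (var_weight v) (d - v - 1) (lagrange_den n d * normal_form_G n d h)"
    using wdeg_le_mult reduced_G_imp_wdeg_le[OF normal_form_G(1)[OF assms(1,2)] v]
    by (fastforce simp: notin_vars_iff_wdeg_le)
next
  fix a assume a: "inj_on a {0..<n}" "a ` {0..<n} \<subseteq> Yvars n d"
  have "subst (assign n a) (lagrange_den n d) = (lagrange_den n d :: 'a mpoly)"
    using vars_lagrange_den by (intro subst_assign_eq_self) fastforce
  then show "subst (assign n a) (lagrange_num n d h)
      = subst (assign n a) (lagrange_den n d * normal_form_G n d h)"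
    using subst_assign_lagrange_num[OF assms(3,4) a]
      subst_assign_normal_form_G[OF assms(1,2) a, of h]
    by (simp add: subst_mult)
qed

lemma wdeg_le_normal_form_G:
  fixes h :: "'a::idom mpoly"
  assumes "1 \<le> n" "n \<le> d" "vars h \<subseteq> Xvars n" "symmetric_in (Xvars n) h" "v < n"
  shows "wdeg_le (var_weight v) (d - n) (normal_form_G n d h)"
proof (rule wdeg_le_mult_cancel[OF _ lagrange_den_nonzero])
  show "wdeg_le (var_weight v) 0 (lagrange_den n d)"
    by (rule vars_subset_imp_wdeg_le_0[OF vars_lagrange_den]) (use assms(5) in simp)
  show "wdeg_le (var_weight v) (d - n) (lagrange_den n d * normal_form_G n d h)"
    using wdeg_le_lagrange_num[OF assms(3,5), where d = d]
    by (simp only: lagrange_num_eq_normal_form_G[OF assms(1-4)])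
qed

lemma vars_normal_form_G:
  fixes h :: "'a::idom mpoly"
  assumes "1 \<le> n" "n \<le> d" "vars h \<subseteq> Xvars n" "symmetric_in (Xvars n) h"
  shows "vars (normal_form_G n d h) \<subseteq> Xvars n \<union> Yvars n d"
proof (rule vars_mult_cancel[OF lagrange_den_nonzero])
  show "vars (lagrange_den n d) \<subseteq> Xvars n \<union> Yvars n d"
    using vars_lagrange_den[of n d] by blast
  show "vars (lagrange_den n d * normal_form_G n d h) \<subseteq> Xvars n \<union> Yvars n d"
    using vars_lagrange_num[OF assms(3), of d]
    by (simp only: lagrange_num_eq_normal_form_G[OF assms])
qed

lemma lagrange_rY_eq_normal_form_G:
  fixes h :: "'a::idom mpoly"
  assumes "1 \<le> n" "n \<le> d" "vars h \<subseteq> Xvars n" "symmetric_in (Xvars n) h"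
  shows "lagrange_rY n d h = fr (normal_form_G n d h)"
  using lagrange_den_nonzero[where 'a = 'a, of n d]
  by (simp add: lagrange_rY_eq lagrange_num_eq_normal_form_G[OF assms] eq_fract)

theorem corollary2p4:
  fixes n d :: nat and h :: "'a::idom mpoly"
  assumes "1 \<le> n" and "n \<le> d"
    and "vars h \<subseteq> Xvars n"
    and "symmetric_in (Xvars n) h"
  shows "vars (normal_form_G n d h) \<subseteq> Xvars n \<union> Yvars n d
    \<and> symmetric_in (Xvars n) (normal_form_G n d h)
    \<and> (\<forall>m\<in>Poly_Mapping.keys (normal_form_G n d h). \<forall>i\<in>Xvars n. Poly_Mapping.lookup m i \<le> d - n)
    \<and> symmetric_in (Yvars n d) (normal_form_G n d h)
    \<and> lagrange_rY n d h = fr (normal_form_G n d h)"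
proof -
  have deg: "\<And>v. v < n \<Longrightarrow> wdeg_le (var_weight v) (d - n) (normal_form_G n d h)"
    by (rule wdeg_le_normal_form_G[OF assms])
  then have "\<forall>m\<in>Poly_Mapping.keys (normal_form_G n d h). \<forall>i\<in>Xvars n.
      Poly_Mapping.lookup m i \<le> d - n"
    unfolding wdeg_le_var_weight_iff by simp
  then show ?thesis
    using vars_normal_form_G[OF assms] normal_form_G_symmetric_X[OF assms(1,2,4) deg]
      normal_form_G_symmetric_Y[OF assms(1-3)] lagrange_rY_eq_normal_form_G[OF assms]
    by blast
qed

end
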